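(* Let $\alpha,\beta\in(0,1)$, and let $u\in C([0,1],L(\mathbb{R}^n,\mathbb{R}^m))$, $v\in\mathcal{C}^\alpha(L(\mathbb{R}^d,\mathbb{R}^n))$ and $w\in\mathcal{C}^\beta(\mathbb{R}^d)$. Then \[ \|\pi_<(u,\pi_<(v,w))-\pi_<(uv,w)\|_{\alpha+\beta}\lesssim\|u\|_\infty\|v\|_\alpha\|w\|_\beta. \]
   Context: Index set: pairs $(p,m)$ with either $p=-1,m=0$, or $p\in\mathbb{N}=\{0,1,2,\dots\}$ and $0\le m\le 2^p$. For $p\in\mathbb{N}$, $1\le m\le 2^p$ set $t^0_{pm}=(m-1)2^{-p}$, $t^1_{pm}=(2m-1)2^{-p-1}$, $t^2_{pm}=m2^{-p}$. Rescaled Haar functions: for $p\in\mathbb{N}$, $1\le m\le 2^p$, $\chi_{pm}=2^p$ on $[t^0_{pm},t^1_{pm})$, $=-2^p$ on $[t^1_{pm},t^2_{pm})$, $=0$ elsewhere; $\chi_{00}\equiv1$; $\chi_{p0}\equiv0$ for $p\ge1$. Rescaled Schauder functions: $\varphi_{pm}(t)=\int_0^t\chi_{pm}(s)\,ds$ for $p\in\mathbb{N}$, and $\varphi_{-10}\equiv1$. For continuous $f:[0,1]\to E$ ($E$ a finite-dimensional normed space), coefficients: $f_{-10}=f(0)$, $f_{00}=f(1)-f(0)$, $f_{p0}=0$ for $p\ge1$, $f_{pm}=2f(t^1_{pm})-f(t^0_{pm})-f(t^2_{pm})$ for $p\in\mathbb{N},m\ge1$. Schauder blocks: $\Delta_pf=\sum_{m=0}^{2^p}f_{pm}\varphi_{pm}$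 ($p\ge-1$), $S_pf=\sum_{q=-1}^p\Delta_qf$. For $\alpha>0$, $\|f\|_\alpha:=\sup_{p,m}2^{p\alpha}|f_{pm}|$ and $\mathcal{C}^\alpha(E):=\{f\in C([0,1],E):\|f\|_\alpha<\infty\}$. Paraproduct: $\pi_<(v,w):=\sum_{p\ge0}S_{p-1}v\,\Delta_pw$ (products are compositions/applications of linear maps). $\|\cdot\|_\infty$ is the sup norm; $\lesssim$ hides a constant depending only on $\alpha,\beta$. *)

theory Defs
  imports "HOL-Analysis.Analysis"
begin

text \<open>Conventions: a vector in R^k is a function x :: nat \<Rightarrow> real of which only the
coordinates i < k are used; a linear map in L(R^n,R^m) is a matrix
A :: nat \<Rightarrow> nat \<Rightarrow> real of which only the entries A i j with i < m, j < n are used.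
Dimensions are explicit natural numbers so that the constant can be chosen
independently of them.\<close>

definition vnorm :: "nat \<Rightarrow> (nat \<Rightarrow> real) \<Rightarrow> real" where
  "vnorm k x = sqrt (\<Sum>i<k. (x i)\<^sup>2)"

definition matvec :: "nat \<Rightarrow> (nat \<Rightarrow> nat \<Rightarrow> real) \<Rightarrow> (nat \<Rightarrow> real) \<Rightarrow> (nat \<Rightarrow> real)" where
  "matvec n A x = (\<lambda>i. \<Sum>j<n. A i j * x j)"

definition matmul :: "nat \<Rightarrow> (nat \<Rightarrow> nat \<Rightarrow> real) \<Rightarrow> (nat \<Rightarrow> nat \<Rightarrow> real) \<Rightarrow> (nat \<Rightarrow> nat \<Rightarrow> real)" where
  "matmul n A B = (\<lambda>i j. \<Sum>k<n. A i k * B k j)"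

definition opnorm :: "nat \<Rightarrow> nat \<Rightarrow> (nat \<Rightarrow> nat \<Rightarrow> real) \<Rightarrow> real" where
  "opnorm m n A = Sup {vnorm m (matvec n A x) | x. vnorm n x \<le> 1}"

definition tt0 :: "nat \<Rightarrow> nat \<Rightarrow> real" where "tt0 p m = (real m - 1) / 2 ^ p"
definition tt1 :: "nat \<Rightarrow> nat \<Rightarrow> real" where "tt1 p m = (2 * real m - 1) / 2 ^ (p + 1)"
definition tt2 :: "nat \<Rightarrow> nat \<Rightarrow> real" where "tt2 p m = real m / 2 ^ p"

definition haar :: "nat \<Rightarrow> nat \<Rightarrow> real \<Rightarrow> real" where
  "haar p m s =
     (if m = 0 then (if p = 0 then 1 else 0)
      else if tt0 p m \<le> s \<and> s < tt1 p m then 2 ^ p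
      else if tt1 p m \<le> s \<and> s < tt2 p m then - (2 ^ p)
      else 0)"

text \<open>Rescaled Schauder functions phi_pm, p \<in> N (phi_{-1,0} = 1 is handled separately).\<close>
definition schauder :: "nat \<Rightarrow> nat \<Rightarrow> real \<Rightarrow> real" where
  "schauder p m t = integral {0..t} (haar p m)"

text \<open>Schauder coefficients f_pm (p \<in> N) of a scalar function; f_{-1,0} = f 0.\<close>
definition scoef :: "(real \<Rightarrow> real) \<Rightarrow> nat \<Rightarrow> nat \<Rightarrow> real" where
  "scoef f p m =
     (if m = 0 then (if p = 0 then f 1 - f 0 else 0)
      else 2 * f (tt1 p m) - f (tt0 p m) - f (tt2 p m))"

text \<open>Schauder block Delta_p f for p \<in> N (Delta_{-1} f = f 0).\<close>
definition sdelta :: "(real \<Rightarrow> real) \<Rightarrow> nat \<Rightarrow> real \<Rightarrow> real" where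
  "sdelta f p t = (\<Sum>m\<in>{0..2 ^ p}. scoef f p m * schauder p m t)"

text \<open>Partial sums S_p f = sum_{q=-1}^p Delta_q f, for integer p \<ge> -1.\<close>
definition spart :: "(real \<Rightarrow> real) \<Rightarrow> int \<Rightarrow> real \<Rightarrow> real" where
  "spart f p t = f 0 + (\<Sum>q<nat (p + 1). sdelta f q t)"

text \<open>Paraproduct pi_<(V,W) = sum_{p\<ge>0} S_{p-1}V Delta_p W, for a matrix-valued V
(linear maps R^k \<rightarrow> R^_) and a vector-valued W (in R^k); coordinatewise series.\<close>
definition paraprod :: "nat \<Rightarrow> (real \<Rightarrow> nat \<Rightarrow> nat \<Rightarrow> real) \<Rightarrow> (real \<Rightarrow> nat \<Rightarrow> real) \<Rightarrow> real \<Rightarrow> nat \<Rightarrow> real" where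
  "paraprod k V W t i =
     (\<Sum>p. \<Sum>j<k. spart (\<lambda>s. V s i j) (int p - 1) t * sdelta (\<lambda>s. W s j) p t)"

definition vcoef :: "(real \<Rightarrow> nat \<Rightarrow> real) \<Rightarrow> nat \<Rightarrow> nat \<Rightarrow> (nat \<Rightarrow> real)" where
  "vcoef f p m = (\<lambda>i. scoef (\<lambda>s. f s i) p m)"

definition mcoef :: "(real \<Rightarrow> nat \<Rightarrow> nat \<Rightarrow> real) \<Rightarrow> nat \<Rightarrow> nat \<Rightarrow> (nat \<Rightarrow> nat \<Rightarrow> real)" where
  "mcoef f p m = (\<lambda>i j. scoef (\<lambda>s. f s i j) p m)"

text \<open>The sets {2^{p alpha} |f_pm|} over the index set (including (p,m) = (-1,0)).\<close>
definition hset_vec :: "real \<Rightarrow> nat \<Rightarrow> (real \<Rightarrow> nat \<Rightarrow> real) \<Rightarrow> real set" where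
  "hset_vec a k f = insert (2 powr (- a) * vnorm k (f 0))
      {2 powr (real p * a) * vnorm k (vcoef f p m) | p m. m \<le> 2 ^ p}"

definition hset_mat :: "real \<Rightarrow> nat \<Rightarrow> nat \<Rightarrow> (real \<Rightarrow> nat \<Rightarrow> nat \<Rightarrow> real) \<Rightarrow> real set" where
  "hset_mat a m n f = insert (2 powr (- a) * opnorm m n (f 0))
      {2 powr (real p * a) * opnorm m n (mcoef f p q) | p q. q \<le> 2 ^ p}"

definition hnorm_vec :: "real \<Rightarrow> nat \<Rightarrow> (real \<Rightarrow> nat \<Rightarrow> real) \<Rightarrow> real" where
  "hnorm_vec a k f = Sup (hset_vec a k f)"

definition hnorm_mat :: "real \<Rightarrow> nat \<Rightarrow> nat \<Rightarrow> (real \<Rightarrow> nat \<Rightarrow> nat \<Rightarrow> real) \<Rightarrow> real" where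
  "hnorm_mat a m n f = Sup (hset_mat a m n f)"

definition cont_vec :: "nat \<Rightarrow> (real \<Rightarrow> nat \<Rightarrow> real) \<Rightarrow> bool" where
  "cont_vec k f = (\<forall>i<k. continuous_on {0..1} (\<lambda>t. f t i))"

definition cont_mat :: "nat \<Rightarrow> nat \<Rightarrow> (real \<Rightarrow> nat \<Rightarrow> nat \<Rightarrow> real) \<Rightarrow> bool" where
  "cont_mat m n f = (\<forall>i<m. \<forall>j<n. continuous_on {0..1} (\<lambda>t. f t i j))"

definition Hoelder_vec :: "real \<Rightarrow> nat \<Rightarrow> (real \<Rightarrow> nat \<Rightarrow> real) \<Rightarrow> bool" where
  "Hoelder_vec a k f = (cont_vec k f \<and> bdd_above (hset_vec a k f))"

definition Hoelder_mat :: "real \<Rightarrow> nat \<Rightarrow> nat \<Rightarrow> (real \<Rightarrow> nat \<Rightarrow> nat \<Rightarrow> real) \<Rightarrow> bool" where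
  "Hoelder_mat a m n f = (cont_mat m n f \<and> bdd_above (hset_mat a m n f))"

definition supnorm_mat :: "nat \<Rightarrow> nat \<Rightarrow> (real \<Rightarrow> nat \<Rightarrow> nat \<Rightarrow> real) \<Rightarrow> real" where
  "supnorm_mat m n u = Sup ((\<lambda>t. opnorm m n (u t)) ` {0..1})"

end

theory Submission
  imports Defs
begin

text \<open>The Schauder coefficient \<open>(r,k)\<close> of a paraproduct \<open>\<pi>\<^sub><(V,W)\<close> is a second difference over
  the \<open>k\<close>-th dyadic interval of level \<open>r\<close>. The blocks \<open>p < r\<close> are products of two functions that
  are affine on this interval, so they contribute \<open>-2\<close> times a product of increments; by the
  Hoelder bounds these are \<open>O(2^(2(p-r)) 2^(-p(\<alpha>+\<beta>)))\<close>, which sums to \<open>O(2^(-r(\<alpha>+\<beta>)))\<close> as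
  \<open>\<alpha> + \<beta> < 2\<close>. The block \<open>p = r\<close> contributes the value of \<open>S\<^sub>r\<^sub>-\<^sub>1V\<close> at the midpoint times
  \<open>W\<^sub>r\<^sub>k\<close>. In the commutator these leading terms of \<open>\<pi>\<^sub><(u,\<pi>\<^sub><(v,w))\<close> and \<open>\<pi>\<^sub><(uv,w)\<close> cancel up to
  a product of the increments of \<open>u\<close> and \<open>v\<close> over one dyadic interval, which is again of order
  \<open>2^(-r(\<alpha>+\<beta>))\<close>.\<close>

section \<open>Schauder blocks on dyadic intervals\<close>

lemma has_field_derivative_if_affine_near:
  fixes F :: "real \<Rightarrow> real"
  assumes "open S" "x \<in> S" "\<And>y. y \<in> S \<Longrightarrow> F y = a * y + b"
  shows "(F has_field_derivative a) (at x)"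
proof -
  have "((\<lambda>y. a * y + b) has_field_derivative a) (at x)"
    by (auto intro!: derivative_eq_intros)
  then show ?thesis
    using has_field_derivative_transform_within_open[OF _ assms(1,2)] assms(3) by auto
qed

lemma schauder_eq_tent:
  assumes "1 \<le> m" "0 \<le> t"
  shows "schauder p m t = max 0 (1/2 - \<bar>2^p*t - real m + 1/2\<bar>)"
proof -
  define c :: real where "c = 2^p"
  have c: "c > 0" by (simp add: c_def)
  define F where "F = (\<lambda>y::real. max 0 (1/2 - \<bar>c*y - real m + 1/2\<bar>))"
  define l h r where "l = (real m - 1)/c" and "h = (real m - 1/2)/c" and "r = real m/c"
  have lhr: "l < h" "h < r" using c by (simp_all add: l_def h_def r_def divide_strict_right_mono)
  have F_left: "F y = 0" if "y < l" for y
    using that c by (simp add: F_def l_def field_simps)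
  have F_up: "F y = c * y + (1 - real m)" if "l < y" "y < h" for y
    using that c by (simp add: F_def l_def h_def field_simps)
  have F_down: "F y = -c * y + real m" if "h < y" "y < r" for y
    using that c by (simp add: F_def h_def r_def field_simps)
  have F_right: "F y = 0" if "r < y" for y
    using that c by (simp add: F_def r_def field_simps)
  have haar: "haar p m x = (if l \<le> x \<and> x < h then c else if h \<le> x \<and> x < r then -c else 0)" for x
    using assms(1) unfolding haar_def tt0_def tt1_def tt2_def l_def h_def r_def c_def
    by (auto simp: field_simps)
  have "(F has_field_derivative haar p m x) (at x)" if x: "x \<notin> {l, h, r}" for x
  proof -
    consider "x < l" | "l < x" "x < h" | "h < x" "x < r" | "r < x"
      using x lhr by fastforce
    then show ?thesis
    proof cases
      case 1
      show ?thesis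
        by (rule has_field_derivative_if_affine_near[where S="{..<l}" and a=0 and b=0, THEN DERIV_cong])
           (use 1 lhr in \<open>auto simp: haar F_left F_up F_down F_right\<close>)
    next
      case 2
      show ?thesis
        by (rule has_field_derivative_if_affine_near[where S="{l<..<h}" and a=c and b="1 - real m", THEN DERIV_cong])
           (use 2 lhr in \<open>auto simp: haar F_left F_up F_down F_right\<close>)
    next
      case 3
      show ?thesis
        by (rule has_field_derivative_if_affine_near[where S="{h<..<r}" and a="-c" and b="real m", THEN DERIV_cong])
           (use 3 lhr in \<open>auto simp: haar F_left F_up F_down F_right\<close>)
    next
      case 4
      show ?thesis
        by (rule has_field_derivative_if_affine_near[where S="{r<..}" and a=0 and b=0, THEN DERIV_cong])
           (use 4 lhr in \<open>auto simp: haar F_left F_up F_down F_right\<close>)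
    qed
  qed
  then have "(haar p m has_integral (F t - F 0)) {0..t}"
    by (intro fundamental_theorem_of_calculus_strong[of "{l, h, r}"])
       (auto simp: assms F_def has_real_derivative_iff_has_vector_derivative intro!: continuous_intros)
  moreover have "F 0 = 0" using assms(1) by (simp add: F_def)
  ultimately show ?thesis unfolding schauder_def F_def c_def by (simp add: integral_unique)
qed

lemma schauder_0_0: "0 \<le> t \<Longrightarrow> schauder 0 0 t = t"
  unfolding schauder_def haar_def by simp

lemma schauder_pos_0: "0 < p \<Longrightarrow> schauder p 0 t = 0"
  unfolding schauder_def haar_def by simp

lemma tent_on_unit_interval:
  fixes x :: real
  assumes "1 \<le> m" "real j \<le> x" "x \<le> real j + 1"
  shows "max 0 (1/2 - \<bar>x - real m + 1/2\<bar>) = (if m = j+1 then min (x - real j) (real j + 1 - x) else 0)"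
proof (cases "m = j+1")
  case True then show ?thesis using assms by (auto simp: abs_if min_def)
next
  case False
  then have "m \<le> j \<or> m \<ge> j+2" by auto
  then show ?thesis
  proof
    assume "m \<le> j" then have "real m \<le> real j" by simp
    then show ?thesis using False assms by (auto simp: abs_if)
  next
    assume "m \<ge> j+2" then have "real m \<ge> real j + 2" by simp
    then show ?thesis using False assms by (auto simp: abs_if)
  qed
qed

lemma sdelta_on_dyadic_interval:
  assumes "j < 2^p" "real j \<le> 2^p*t" "2^p*t \<le> real j + 1" "0 \<le> t"
  shows "sdelta g p t = scoef g p (j+1) * min (2^p*t - real j) (real j + 1 - 2^p*t)
           + (if p = 0 then scoef g 0 0 * t else 0)"
proof -
  have split: "{0..(2::nat)^p} = insert 0 {1..2^p}" by auto
  have "(\<Sum>m\<in>{1..(2::nat)^p}. scoef g p m * schauder p m t)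
      = (\<Sum>m\<in>{1..(2::nat)^p}. (if m = j+1 then scoef g p (j+1) * min (2^p*t - real j) (real j + 1 - 2^p*t) else 0))"
  proof (rule sum.cong)
    fix m assume "m \<in> {1..(2::nat)^p}"
    then have "1 \<le> m" by auto
    then show "scoef g p m * schauder p m t = (if m = j+1 then scoef g p (j+1) * min (2^p*t - real j) (real j + 1 - 2^p*t) else 0)"
      using schauder_eq_tent[OF \<open>1 \<le> m\<close> assms(4), of p] tent_on_unit_interval[OF \<open>1 \<le> m\<close> assms(2,3)] by auto
  qed simp
  also have "\<dots> = scoef g p (j+1) * min (2^p*t - real j) (real j + 1 - 2^p*t)"
    using assms(1) by (simp add: sum.delta)
  finally have A: "(\<Sum>m\<in>{1..(2::nat)^p}. scoef g p m * schauder p m t) = scoef g p (j+1) * min (2^p*t - real j) (real j + 1 - 2^p*t)" .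
  have B: "scoef g p 0 * schauder p 0 t = (if p = 0 then scoef g 0 0 * t else 0)"
    using schauder_0_0[OF assms(4)] schauder_pos_0[of p t] by auto
  show ?thesis unfolding sdelta_def split
    by (subst sum.insert) (use A B in auto)
qed

lemma of_nat_even_odd:
  fixes j :: nat
  shows "even j \<Longrightarrow> real j = 2 * real (j div 2)" "odd j \<Longrightarrow> real j = 2 * real (j div 2) + 1"
proof -
  assume "even j" then obtain a where "j = 2*a" by blast
  then show "real j = 2 * real (j div 2)" by simp
next
  assume "odd j" then obtain a where "j = 2*a+1" using oddE by blast
  then show "real j = 2 * real (j div 2) + 1" by simp
qed

lemma sdelta_on_half_interval:
  assumes "j < 2^(p+1)" "real j \<le> 2^(p+1)*t" "2^(p+1)*t \<le> real j + 1" "0 \<le> t"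
  shows "sdelta g p t = scoef g p (j div 2 + 1) *
      (if even j then 2^p*t - real (j div 2) else real (j div 2) + 1 - 2^p*t)
           + (if p = 0 then scoef g 0 0 * t else 0)"
proof -
  define J where "J = j div 2"
  have J: "J < 2^p" using assms(1) unfolding J_def by (simp add: less_mult_imp_div_less mult.commute)
  have p2: "(2::real)^(p+1)*t = 2 * (2^p*t)" by simp
  show ?thesis
  proof (cases "even j")
    case True
    then have rj: "real j = 2 * real J" using of_nat_even_odd J_def by auto
    have h1: "real J \<le> 2^p*t" "2^p*t \<le> real J + 1/2" using assms(2,3) rj p2 by linarith+
    have "min (2^p*t - real J) (real J + 1 - 2^p*t) = 2^p*t - real J" using h1 by simp
    then show ?thesis using sdelta_on_dyadic_interval[OF J _ _ assms(4), of g] h1 True unfolding J_def[symmetric]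
      by auto
  next
    case False
    then have rj: "real j = 2 * real J + 1" using of_nat_even_odd J_def by auto
    have h1: "real J + 1/2 \<le> 2^p*t" "2^p*t \<le> real J + 1" using assms(2,3) rj p2 by linarith+
    have "min (2^p*t - real J) (real J + 1 - 2^p*t) = real J + 1 - 2^p*t" using h1 by simp
    then show ?thesis using sdelta_on_dyadic_interval[OF J _ _ assms(4), of g] h1 False unfolding J_def[symmetric]
      by auto
  qed
qed

lemma spart_minus_one: "spart g (-1) t = g 0" by (simp add: spart_def)
lemma spart_0: "spart g 0 t = g 0 + sdelta g 0 t" by (simp add: spart_def)
lemma spart_Suc: "spart g (int (Suc p)) t = spart g (int p) t + sdelta g (Suc p) t"
proof -
  have "nat (int (Suc p) + 1) = Suc (Suc p)" "nat (int p + 1) = Suc p" by simp_all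
  then show ?thesis by (simp add: spart_def)
qed

lemma scoef_eq: "1 \<le> m \<Longrightarrow> scoef g p m = 2 * g ((2*real m - 1)/2^(p+1)) - g ((real m - 1)/2^p) - g (real m/2^p)"
  by (simp add: scoef_def tt0_def tt1_def tt2_def)

lemma spart_interpolates:
  assumes "j < 2^(p+1)" "real j \<le> 2^(p+1)*t" "2^(p+1)*t \<le> real j + 1" "0 \<le> t"
  shows "spart g (int p) t = g (real j/2^(p+1)) + (2^(p+1)*t - real j) * (g ((real j+1)/2^(p+1)) - g (real j/2^(p+1)))"
  using assms
proof (induction p arbitrary: j t)
  case 0
  have sc: "scoef g 0 1 = 2 * g (1/2) - g 0 - g 1" by (simp add: scoef_eq)
  have sc0: "scoef g 0 0 = g 1 - g 0" by (simp add: scoef_def)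
  have "j = 0 \<or> j = 1" using 0 by auto
  then show ?case
  proof
    assume j: "j = 0"
    have "sdelta g 0 t = scoef g 0 1 * t + scoef g 0 0 * t" using sdelta_on_half_interval[OF 0(1-4), of g] j by simp
    then show ?thesis unfolding sc sc0 using j by (simp add: spart_0 algebra_simps)
  next
    assume j: "j = 1"
    have "sdelta g 0 t = scoef g 0 1 * (1 - t) + scoef g 0 0 * t" using sdelta_on_half_interval[OF 0(1-4), of g] j by simp
    then show ?thesis unfolding sc sc0 using j by (simp add: spart_0 algebra_simps)
  qed
next
  case (Suc p)
  define i where "i = j div 2"
  have p2: "(2::real)^(Suc p+1)*t = 2 * (2^(p+1)*t)" by simp
  have i: "i < 2^(p+1)" using Suc(2) unfolding i_def by (simp add: less_mult_imp_div_less mult.commute)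
  have rj: "real j = 2 * real i \<or> real j = 2 * real i + 1" using of_nat_even_odd i_def by blast
  have h: "real i \<le> 2^(p+1)*t" "2^(p+1)*t \<le> real i + 1" using Suc(3,4) rj unfolding p2 by linarith+
  note IH = Suc.IH[OF i h Suc(5)]
  note SD = sdelta_on_half_interval[OF Suc(2-5), of g, folded i_def]
  have sc: "scoef g (Suc p) (i+1) = 2 * g ((2*real i + 1)/2^(p+2)) - g (real i/2^(p+1)) - g ((real i + 1)/2^(p+1))"
    by (simp add: scoef_eq algebra_simps)
  show ?case
  proof (cases "even j")
    case True
    then have rj: "real j = 2 * real i" using of_nat_even_odd i_def by auto
    have e1: "real j / 2^(Suc p+1) = real i / 2^(p+1)" using rj by (simp add: field_simps)
    have e2: "(real j + 1) / 2^(Suc p+1) = (2*real i + 1)/2^(p+2)" using rj by simp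
    show ?thesis unfolding spart_Suc IH SD e1 e2 sc using True rj
      by (simp add: algebra_simps)
  next
    case False
    then have rj: "real j = 2 * real i + 1" using of_nat_even_odd i_def by auto
    have e1: "real j / 2^(Suc p+1) = (2*real i + 1)/2^(p+2)" using rj by simp
    have e2: "(real j + 1) / 2^(Suc p+1) = (real i + 1) / 2^(p+1)" using rj by (simp add: field_simps)
    show ?thesis unfolding spart_Suc IH SD e1 e2 sc using False rj
      by (simp add: algebra_simps)
  qed
qed

lemma dyadic_ancestor:
  assumes "K < 2^N" "M \<le> N"
  shows "K div 2^(N-M) < 2^M" "real (K div 2^(N-M)) \<le> 2^M * (real K / 2^N)"
        "2^M * ((real K + 1)/2^N) \<le> real (K div 2^(N-M)) + 1"
proof -
  define d :: nat where "d = 2^(N-M)"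
  have d: "0 < d" "(2::nat)^N = 2^M * d" "(2::real)^N = 2^M * d"
    using assms(2) by (simp_all add: d_def flip: power_add)
  have low: "real (K div d * d) \<le> real K" by (rule of_nat_mono[OF div_times_less_eq_dividend])
  have high: "real (K + 1) \<le> real ((K div d + 1) * d)"
    using dividend_less_div_times[OF d(1), of K] by (intro of_nat_mono) simp
  have e: "2^M * (x / 2^N) = x / d" for x :: real using d(1,3) by (simp add: field_simps)
  show "K div 2^(N-M) < 2^M" using assms(1) d(2) unfolding d_def[symmetric] by (simp add: less_mult_imp_div_less)
  show "real (K div 2^(N-M)) \<le> 2^M * (real K / 2^N)"
    using low d(1) unfolding e d_def[symmetric] by (simp add: field_simps)
  show "2^M * ((real K + 1)/2^N) \<le> real (K div 2^(N-M)) + 1"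
    using high d(1) unfolding e d_def[symmetric] by (simp add: field_simps)
qed

lemma half_dyadic_interval:
  assumes "real j \<le> 2^(p+1)*t" "2^(p+1)*t \<le> real j + 1"
  shows "real (j div 2) \<le> 2^p*t" "2^p*t \<le> real (j div 2) + 1"
proof -
  have p2: "(2::real)^(p+1)*t = 2 * (2^p*t)" by simp
  have "real j = 2 * real (j div 2) \<or> real j = 2 * real (j div 2) + 1" using of_nat_even_odd by blast
  then show "real (j div 2) \<le> 2^p*t" "2^p*t \<le> real (j div 2) + 1" using assms unfolding p2 by linarith+
qed

lemma half_dyadic_index: "j < 2^(p+1) \<Longrightarrow> j div 2 < (2::nat)^p"
  by (simp add: less_mult_imp_div_less mult.commute)

lemma sdelta_diff_on_dyadic_interval:
  assumes "j < 2^(p+1)" "real j \<le> 2^(p+1)*t" "2^(p+1)*t \<le> real j + 1" "0 \<le> t"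
     "real j \<le> 2^(p+1)*t'" "2^(p+1)*t' \<le> real j + 1" "0 \<le> t'"
  shows "sdelta g p t' - sdelta g p t = (t' - t) * ((if even j then 2^p else -(2^p)) * scoef g p (j div 2 + 1)
           + (if p = 0 then scoef g 0 0 else 0))"
  using sdelta_on_half_interval[OF assms(1-4), of g] sdelta_on_half_interval[OF assms(1) assms(5-7), of g]
  by (auto simp: algebra_simps)

lemma spart_diff_on_dyadic_interval:
  assumes "J < 2^(q+1)" "real J \<le> 2^(q+1)*t" "2^(q+1)*t \<le> real J + 1" "0 \<le> t"
     "real J \<le> 2^(q+1)*t'" "2^(q+1)*t' \<le> real J + 1" "0 \<le> t'"
  shows "spart g (int q) t' - spart g (int q) t = (t' - t) * 2^(q+1) * (g ((real J + 1)/2^(q+1)) - g (real J/2^(q+1)))"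
  using spart_interpolates[OF assms(1-4), of g] spart_interpolates[OF assms(1) assms(5-7), of g]
  by (auto simp: algebra_simps)

lemma spart_at_grid:
  assumes "J \<le> 2^(q+1)"
  shows "spart g (int q) (real J/2^(q+1)) = g (real J/2^(q+1))"
proof (cases "J < 2^(q+1)")
  case True
  show ?thesis using spart_interpolates[OF True, of "real J/2^(q+1)" g] by simp
next
  case False
  then have J: "J = 2^(q+1)" using assms by simp
  have "2^(q+1) - 1 < (2::nat)^(q+1)" by simp
  from spart_interpolates[OF this, of 1 g] show ?thesis using J by (simp add: of_nat_diff)
qed

lemma spart_at_midpoint:
  assumes "J < 2^(q+1)"
  shows "spart g (int q) ((2*real J + 1)/2^(q+2)) = (g (real J/2^(q+1)) + g ((real J + 1)/2^(q+1)))/2"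
proof -
  have e: "2^(q+1) * ((2*real J + 1)/2^(q+2)) = real J + 1/2" by (simp add: field_simps)
  show ?thesis using spart_interpolates[OF assms, of "(2*real J + 1)/2^(q+2)" g] unfolding e
    by (simp add: algebra_simps)
qed

lemma sdelta_at_grid:
  assumes "1 \<le> p" "L \<le> 2^p"
  shows "sdelta g p (real L/2^p) = 0"
proof (cases "L = 0")
  case True
  have "(0::nat) < 2^p" by simp
  from sdelta_on_dyadic_interval[OF this, of 0 g] show ?thesis using True assms by simp
next
  case False
  then have L: "L - 1 < 2^p" "real (L - 1) = real L - 1" using assms by (auto simp: of_nat_diff)
  from sdelta_on_dyadic_interval[OF L(1), of "real L/2^p" g] show ?thesis using assms L by simp
qed

lemma sdelta_at_coarser_grid:
  assumes "1 \<le> N" "N \<le> p" "L \<le> 2^N"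
  shows "sdelta g p (real L/2^N) = 0"
proof -
  have e: "real L/2^N = real (L * 2^(p-N)) / 2^p"
    using assms(2) by (simp add: field_simps flip: power_add)
  have "L * 2^(p-N) \<le> 2^N * 2^(p-N)" using assms(3) by simp
  also have "\<dots> = 2^p" using assms(2) by (simp flip: power_add)
  finally show ?thesis unfolding e using assms by (intro sdelta_at_grid) auto
qed

lemma sdelta_at_midpoint:
  assumes "1 \<le> p" "1 \<le> k" "k \<le> 2^p"
  shows "sdelta g p ((2*real k - 1)/2^(p+1)) = scoef g p k / 2"
proof -
  have k: "k - 1 < 2^p" "real (k-1) = real k - 1" using assms by (auto simp: of_nat_diff)
  have e: "2^p * ((2*real k - 1)/2^(p+1)) = real k - 1/2" by (simp add: field_simps)
  from sdelta_on_dyadic_interval[OF k(1), of "(2*real k - 1)/2^(p+1)" g] show ?thesis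
    using assms k unfolding e by (simp add: min_def)
qed

lemma sdelta_0_eq:
  assumes "0 \<le> t" "t \<le> 1"
  shows "sdelta g 0 t = scoef g 0 1 * min t (1 - t) + scoef g 0 0 * t"
  using sdelta_on_dyadic_interval[of 0 0 t g] assms by simp

lemma matvec_add_left: "matvec n (\<lambda>i j. A i j + B i j) x = (\<lambda>i. matvec n A x i + matvec n B x i)"
  by (simp add: matvec_def algebra_simps sum.distrib)

lemma matvec_diff_left: "matvec n (\<lambda>i j. A i j - B i j) x = (\<lambda>i. matvec n A x i - matvec n B x i)"
  by (simp add: matvec_def algebra_simps sum_subtractf)

lemma matvec_scale_left: "matvec n (\<lambda>i j. c * A i j) x = (\<lambda>i. c * matvec n A x i)"
  by (simp add: matvec_def sum_distrib_left algebra_simps)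

lemma matvec_sum_left: "matvec n (\<lambda>i j. \<Sum>p\<in>P. A p i j) x = (\<lambda>i. \<Sum>p\<in>P. matvec n (A p) x i)"
  by (simp add: matvec_def sum_distrib_right sum.swap[of _ "{..<n}"])

lemma matvec_add_right: "matvec n A (\<lambda>j. x j + y j) i = matvec n A x i + matvec n A y i"
  by (simp add: matvec_def sum.distrib algebra_simps)

lemma matvec_diff_right: "matvec n A (\<lambda>j. x j - y j) i = matvec n A x i - matvec n A y i"
  by (simp add: matvec_def sum_subtractf algebra_simps)

lemma matvec_divide_left: "matvec n (\<lambda>i j. A i j / c) x = (\<lambda>i. matvec n A x i / c)"
  by (simp add: matvec_def sum_divide_distrib)

lemma matvec_divide_right: "matvec n A (\<lambda>j. x j / c) i = matvec n A x i / c"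
  by (simp add: matvec_def sum_divide_distrib)

lemma matvec_mult_right: "matvec n A (\<lambda>j. x j * c) i = matvec n A x i * c"
  by (simp add: matvec_def sum_distrib_right mult.assoc)

lemma matvec_scale_right: "matvec n A (\<lambda>j. c * x j) = (\<lambda>i. c * matvec n A x i)"
  by (simp add: matvec_def sum_distrib_left algebra_simps)

lemma matvec_scale: "matvec k (\<lambda>i j. c * A i j) (\<lambda>j. c' * x j) i = c * c' * matvec k A x i"
  by (simp add: matvec_def sum_distrib_left algebra_simps)

lemma matvec_matmul: "matvec d (matmul n A B) x i = matvec n A (matvec d B x) i"
  by (simp add: matvec_def matmul_def sum_distrib_left sum_distrib_right sum.swap[of _ "{..<d}"] algebra_simps)

lemmas matvec_linear = matvec_add_left matvec_diff_left matvec_divide_left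
  matvec_add_right matvec_diff_right matvec_divide_right matvec_mult_right matvec_matmul

section \<open>Schauder coefficients of a paraproduct\<close>

text \<open>\<open>spart_mat p V\<close> is \<open>S\<^sub>p\<^sub>-\<^sub>1V\<close>, the factor of \<open>\<Delta>\<^sub>pW\<close> in the paraproduct.\<close>

definition spart_mat :: "nat \<Rightarrow> (real \<Rightarrow> nat \<Rightarrow> nat \<Rightarrow> real) \<Rightarrow> real \<Rightarrow> nat \<Rightarrow> nat \<Rightarrow> real" where
  "spart_mat p V t = (\<lambda>i j. spart (\<lambda>s. V s i j) (int p - 1) t)"

definition sdelta_vec :: "nat \<Rightarrow> (real \<Rightarrow> nat \<Rightarrow> real) \<Rightarrow> real \<Rightarrow> nat \<Rightarrow> real" where
  "sdelta_vec p W t = (\<lambda>j. sdelta (\<lambda>s. W s j) p t)"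

lemma spart_mat_0: "spart_mat 0 V t = V 0"
  by (simp add: spart_mat_def spart_minus_one)

lemma paraprod_eq_suminf: "paraprod k V W t i = (\<Sum>p. matvec k (spart_mat p V t) (sdelta_vec p W t) i)"
  by (simp add: paraprod_def matvec_def spart_mat_def sdelta_vec_def)

lemma paraprod_at_grid:
  assumes "1 \<le> N" "L \<le> 2^N"
  shows "paraprod k V W (real L/2^N) i
       = (\<Sum>p<N. matvec k (spart_mat p V (real L/2^N)) (sdelta_vec p W (real L/2^N)) i)"
  unfolding paraprod_eq_suminf
proof (rule suminf_finite)
  fix p assume "p \<notin> {..<N}"
  then have "sdelta_vec p W (real L/2^N) = (\<lambda>j. 0)"
    unfolding sdelta_vec_def using sdelta_at_coarser_grid assms by auto
  then show "matvec k (spart_mat p V (real L/2^N)) (sdelta_vec p W (real L/2^N)) i = 0"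
    by (simp add: matvec_def)
qed simp

lemma paraprod_at_0: "paraprod k V W 0 i = 0"
proof -
  have "paraprod k V W (real 0/2^1) i
      = (\<Sum>p<1. matvec k (spart_mat p V (real 0/2^1)) (sdelta_vec p W (real 0/2^1)) i)"
    by (rule paraprod_at_grid) auto
  moreover have "sdelta_vec 0 W 0 = (\<lambda>j. 0)" unfolding sdelta_vec_def using sdelta_0_eq[of 0] by simp
  ultimately show ?thesis by (simp add: matvec_def)
qed

lemma paraprod_at_1: "paraprod k V W 1 i = matvec k (V 0) (\<lambda>j. W 1 j - W 0 j) i"
proof -
  have "paraprod k V W (real 2/2^1) i
      = (\<Sum>p<1. matvec k (spart_mat p V (real 2/2^1)) (sdelta_vec p W (real 2/2^1)) i)"
    by (rule paraprod_at_grid) auto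
  moreover have "sdelta_vec 0 W 1 = (\<lambda>j. W 1 j - W 0 j)"
    unfolding sdelta_vec_def using sdelta_0_eq[of 1] by (simp add: scoef_def)
  ultimately show ?thesis by (simp add: spart_mat_0)
qed

text \<open>The \<open>k\<close>-th dyadic interval of level \<open>r\<close> is \<open>[dleft r k, dright r k]\<close>; for \<open>p < r\<close>
  it lies in the interval number \<open>ancestor r k p\<close> (counted from 0) of level \<open>p + 1\<close>, on which
  \<open>S\<^sub>p\<^sub>-\<^sub>1\<close> and \<open>\<Delta>\<^sub>p\<close> are affine.\<close>

definition dleft :: "nat \<Rightarrow> nat \<Rightarrow> real" where "dleft r k = (real k - 1)/2^r"
definition dmid :: "nat \<Rightarrow> nat \<Rightarrow> real" where "dmid r k = (2*real k - 1)/2^(r+1)"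
definition dright :: "nat \<Rightarrow> nat \<Rightarrow> real" where "dright r k = real k/2^r"
definition ancestor :: "nat \<Rightarrow> nat \<Rightarrow> nat \<Rightarrow> nat" where "ancestor r k p = (k - 1) div 2^(r - Suc p)"

lemma dyadic_points:
  assumes "1 \<le> k"
  shows "dmid r k - dleft r k = 1/2^(r+1)" "dright r k - dmid r k = 1/2^(r+1)" "0 \<le> dleft r k"
    "dleft r k \<le> dmid r k" "dmid r k \<le> dright r k"
  using assms by (auto simp: dleft_def dmid_def dright_def field_simps)

lemma vcoef_eq: "1 \<le> k \<Longrightarrow> vcoef F r k i = 2 * F (dmid r k) i - F (dleft r k) i - F (dright r k) i"
  by (simp add: vcoef_def scoef_eq dleft_def dmid_def dright_def)

lemma ancestor_interval:
  assumes "1 \<le> k" "k \<le> 2^r" "p < r" "dleft r k \<le> t" "t \<le> dright r k"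
  shows "ancestor r k p < 2^(p+1)" "real (ancestor r k p) \<le> 2^(p+1)*t"
    "2^(p+1)*t \<le> real (ancestor r k p) + 1"
proof -
  have K: "k - 1 < 2^r" and M: "p+1 \<le> r" and e: "r - (p+1) = r - Suc p" using assms by simp_all
  have rk: "real (k-1) = real k - 1" using assms by (simp add: of_nat_diff)
  note C = dyadic_ancestor[OF K M, unfolded e rk, folded ancestor_def]
  show "ancestor r k p < 2^(p+1)" using C(1) .
  have "2^(p+1) * dleft r k \<le> 2^(p+1)*t" "2^(p+1)*t \<le> 2^(p+1) * dright r k"
    using assms(4,5) by simp_all
  then show "real (ancestor r k p) \<le> 2^(p+1)*t" "2^(p+1)*t \<le> real (ancestor r k p) + 1"
    using C(2,3) unfolding dleft_def dright_def by (simp_all add: rk)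
qed

lemma ancestor_half_bound:
  assumes "1 \<le> k" "k \<le> 2^r" "p < r"
  shows "ancestor r k p div 2 < 2^p"
  using half_dyadic_index ancestor_interval(1)[OF assms, of "dleft r k"] dyadic_points[OF assms(1), of r]
  by simp

lemma spart_mat_diff_left:
  assumes "1 \<le> k" "k \<le> 2^r" "p < r" "dleft r k \<le> t" "t \<le> dright r k" "1 \<le> p"
  shows "spart_mat p V t i j - spart_mat p V (dleft r k) i j
       = (t - dleft r k) * 2^p * (V ((real (ancestor r k p div 2) + 1)/2^p) i j
                                  - V (real (ancestor r k p div 2)/2^p) i j)"
proof -
  obtain q where q: "p = Suc q" using assms(6) by (cases p) auto
  define J where "J = ancestor r k p div 2"
  have P: "0 \<le> dleft r k" "dleft r k \<le> dright r k" using dyadic_points[OF assms(1), of r] by simp_all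
  have J: "J < 2^(q+1)" using ancestor_half_bound[OF assms(1-3)] q unfolding J_def by simp
  have H: "real J \<le> 2^(q+1)*x" "2^(q+1)*x \<le> real J + 1" if "dleft r k \<le> x" "x \<le> dright r k" for x
    using half_dyadic_interval ancestor_interval[OF assms(1-3) that] q unfolding J_def by simp_all
  have "int p - 1 = int q" using q by simp
  then show ?thesis
    using spart_diff_on_dyadic_interval[OF J H[OF order_refl P(2)] P(1) H[OF assms(4,5)], of "\<lambda>s. V s i j"]
      assms(4) P q
    unfolding spart_mat_def J_def by simp
qed

lemma spart_mat_at_midpoint:
  assumes "1 \<le> r" "J < 2^r"
  shows "spart_mat r V (dmid r (J+1)) = (\<lambda>i j. (V (real J/2^r) i j + V ((real J + 1)/2^r) i j)/2)"
proof -
  obtain q where q: "r = Suc q" using assms(1) by (cases r) auto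
  have "int r - 1 = int q" "dmid r (J+1) = (2*real J + 1)/2^(q+2)" using q by (simp_all add: dmid_def)
  then show ?thesis
    unfolding spart_mat_def using spart_at_midpoint[of J q "\<lambda>s. V s _ _"] assms q by (simp add: fun_eq_iff)
qed

lemma sdelta_vec_diff_left:
  assumes "1 \<le> k" "k \<le> 2^r" "p < r" "dleft r k \<le> t" "t \<le> dright r k"
  shows "sdelta_vec p W t j - sdelta_vec p W (dleft r k) j
       = (t - dleft r k) * ((if even (ancestor r k p) then 2^p else -(2^p)) * vcoef W p (ancestor r k p div 2 + 1) j
                             + (if p = 0 then vcoef W 0 0 j else 0))"
proof -
  have P: "0 \<le> dleft r k" "dleft r k \<le> dright r k" using dyadic_points[OF assms(1), of r] by simp_all
  note A = ancestor_interval[OF assms(1-3)]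
  show ?thesis
    using sdelta_diff_on_dyadic_interval[OF A(1)[OF order_refl P(2)] A(2,3)[OF order_refl P(2)] P(1)
        A(2,3)[OF assms(4,5)], of "\<lambda>s. W s j"] assms(4) P
    unfolding sdelta_vec_def vcoef_def by simp
qed

lemma spart_mat_affine:
  assumes "1 \<le> k" "k \<le> 2^r" "p < r"
  shows "spart_mat p V (dright r k) i j - spart_mat p V (dmid r k) i j
       = spart_mat p V (dmid r k) i j - spart_mat p V (dleft r k) i j"
proof (cases "p = 0")
  case True then show ?thesis by (simp add: spart_mat_0)
next
  case False
  then have p: "1 \<le> p" by simp
  note P = dyadic_points[OF assms(1), of r]
  show ?thesis
    using spart_mat_diff_left[OF assms _ _ p, of "dmid r k" V i j]
      spart_mat_diff_left[OF assms _ _ p, of "dright r k" V i j] P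
    by (simp add: algebra_simps)
qed

lemma sdelta_vec_affine:
  assumes "1 \<le> k" "k \<le> 2^r" "p < r"
  shows "sdelta_vec p W (dright r k) j - sdelta_vec p W (dmid r k) j
       = sdelta_vec p W (dmid r k) j - sdelta_vec p W (dleft r k) j"
  using sdelta_vec_diff_left[OF assms, of "dmid r k" W j] sdelta_vec_diff_left[OF assms, of "dright r k" W j]
    dyadic_points[OF assms(1), of r]
  by (simp add: algebra_simps)

lemma second_difference_of_product:
  assumes "\<And>i j. Ac i j - Ab i j = Ab i j - Aa i j" "\<And>j. xc j - xb j = xb j - xa j"
  shows "2 * matvec k Ab xb i - matvec k Aa xa i - matvec k Ac xc i
       = -2 * matvec k (\<lambda>i j. Ab i j - Aa i j) (\<lambda>j. xb j - xa j) i"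
proof -
  have "2 * matvec k Ab xb i - matvec k Aa xa i - matvec k Ac xc i
      = (\<Sum>j<k. 2 * (Ab i j * xb j) - Aa i j * xa j - Ac i j * xc j)"
    by (simp add: matvec_def sum_distrib_left sum_subtractf)
  also have "\<dots> = (\<Sum>j<k. -2 * ((Ab i j - Aa i j) * (xb j - xa j)))"
  proof (rule sum.cong)
    fix j
    have Ac: "Ac i j = 2 * Ab i j - Aa i j" and xc: "xc j = 2 * xb j - xa j"
      using assms(1)[of i j] assms(2)[of j] by linarith+
    show "2 * (Ab i j * xb j) - Aa i j * xa j - Ac i j * xc j = -2 * ((Ab i j - Aa i j) * (xb j - xa j))"
      unfolding Ac xc by (simp add: algebra_simps)
  qed simp
  finally show ?thesis by (simp add: matvec_def sum_distrib_left)
qed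

text \<open>Only the block \<open>p = r\<close> sees the coefficient \<open>(r,k)\<close> itself: \<open>\<Delta>\<^sub>r W\<close> vanishes at the
  endpoints and equals half the coefficient at the midpoint.\<close>

lemma paraprod_top_block:
  fixes kk i :: nat and V :: "real \<Rightarrow> nat \<Rightarrow> nat \<Rightarrow> real" and W :: "real \<Rightarrow> nat \<Rightarrow> real"
  assumes "1 \<le> k" "k \<le> 2^r"
  defines "T \<equiv> \<lambda>t. matvec kk (spart_mat r V t) (sdelta_vec r W t) i"
  shows "2 * T (dmid r k) - T (dleft r k) - T (dright r k) = matvec kk (spart_mat r V (dmid r k)) (vcoef W r k) i"
proof (cases r)
  case 0
  then have k: "k = 1" using assms by simp
  have pts: "dleft 0 1 = 0" "dmid 0 1 = 1/2" "dright 0 1 = 1"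
    by (simp_all add: dleft_def dmid_def dright_def)
  have "2 * sdelta_vec 0 W (1/2) j - sdelta_vec 0 W 0 j - sdelta_vec 0 W 1 j = vcoef W 0 1 j" for j
    unfolding sdelta_vec_def vcoef_def using sdelta_0_eq[of "1/2"] sdelta_0_eq[of 0] sdelta_0_eq[of 1]
    by simp
  then have "matvec kk (V 0) (\<lambda>j. 2 * sdelta_vec 0 W (1/2) j - sdelta_vec 0 W 0 j - sdelta_vec 0 W 1 j) i
      = matvec kk (V 0) (vcoef W r k) i"
    using 0 k by simp
  moreover have "2 * T (dmid r k) - T (dleft r k) - T (dright r k)
      = matvec kk (V 0) (\<lambda>j. 2 * sdelta_vec 0 W (1/2) j - sdelta_vec 0 W 0 j - sdelta_vec 0 W 1 j) i"
    unfolding T_def 0 k pts spart_mat_0 matvec_def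
    by (simp add: sum_distrib_left sum_subtractf sum.distrib algebra_simps)
  ultimately show ?thesis using 0 by (simp add: spart_mat_0)
next
  case (Suc q)
  then have r1: "1 \<le> r" by simp
  have "dleft r k = real (k-1)/2^r" using assms(1) by (simp add: dleft_def of_nat_diff)
  then have za: "sdelta_vec r W (dleft r k) = (\<lambda>j. 0)"
    unfolding sdelta_vec_def using sdelta_at_grid[OF r1, of "k-1"] assms by auto
  have zc: "sdelta_vec r W (dright r k) = (\<lambda>j. 0)"
    unfolding sdelta_vec_def dright_def using sdelta_at_grid[OF r1, of k] assms by auto
  have mb: "sdelta_vec r W (dmid r k) = (\<lambda>j. 1/2 * vcoef W r k j)"
    unfolding sdelta_vec_def dmid_def vcoef_def using sdelta_at_midpoint[OF r1 assms(1,2)] by auto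
  show ?thesis unfolding T_def za zc mb matvec_def by (simp add: sum_distrib_left algebra_simps)
qed

text \<open>For \<open>p < r\<close> both factors of \<open>S\<^sub>p\<^sub>-\<^sub>1V \<Delta>\<^sub>pW\<close> are affine on the \<open>k\<close>-th interval of level \<open>r\<close>,
  so the second difference of their product there is \<open>-2\<close> times the product of their increments
  over the left half.\<close>

definition lower_block_coef ::
  "nat \<Rightarrow> (real \<Rightarrow> nat \<Rightarrow> nat \<Rightarrow> real) \<Rightarrow> (real \<Rightarrow> nat \<Rightarrow> real) \<Rightarrow> nat \<Rightarrow> nat \<Rightarrow> nat \<Rightarrow> nat \<Rightarrow> real"
where
  "lower_block_coef kk V W r k p =
     (\<lambda>i. -2 * matvec kk (\<lambda>i j. spart_mat p V (dmid r k) i j - spart_mat p V (dleft r k) i j)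
                         (\<lambda>j. sdelta_vec p W (dmid r k) j - sdelta_vec p W (dleft r k) j) i)"

lemma paraprod_vcoef:
  assumes "1 \<le> k" "k \<le> 2^r"
  shows "vcoef (paraprod kk V W) r k i
       = matvec kk (spart_mat r V (dmid r k)) (vcoef W r k) i + (\<Sum>p<r. lower_block_coef kk V W r k p i)"
proof -
  define T where "T p t = matvec kk (spart_mat p V t) (sdelta_vec p W t) i" for p t
  have grid: "dleft r k = real (2*k-2)/2^(r+1)" "dmid r k = real (2*k-1)/2^(r+1)"
      "dright r k = real (2*k)/2^(r+1)"
    using assms(1) by (simp_all add: dleft_def dmid_def dright_def of_nat_diff field_simps)
  have at_grid: "paraprod kk V W (real L/2^(r+1)) i = (\<Sum>p<r+1. T p (real L/2^(r+1)))"
    if "L \<le> 2^(r+1)" for L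
    unfolding T_def using paraprod_at_grid[of "r+1" L] that by simp
  have "2*k-2 \<le> 2^(r+1)" "2*k-1 \<le> 2^(r+1)" "2*k \<le> 2^(r+1)" using assms(2) by simp_all
  from at_grid[OF this(1)] at_grid[OF this(2)] at_grid[OF this(3)]
  have "paraprod kk V W t i = (\<Sum>p<r+1. T p t)" if "t \<in> {dleft r k, dmid r k, dright r k}" for t
    using that unfolding grid by auto
  then have "vcoef (paraprod kk V W) r k i
      = (\<Sum>p<r. 2 * T p (dmid r k) - T p (dleft r k) - T p (dright r k))
        + (2 * T r (dmid r k) - T r (dleft r k) - T r (dright r k))"
    unfolding vcoef_eq[OF assms(1)] by (simp add: sum_subtractf sum_distrib_left)
  moreover have "2 * T p (dmid r k) - T p (dleft r k) - T p (dright r k) = lower_block_coef kk V W r k p i"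
    if "p < r" for p
    unfolding T_def lower_block_coef_def
    by (rule second_difference_of_product) (use spart_mat_affine[OF assms that] sdelta_vec_affine[OF assms that] in auto)
  ultimately show ?thesis
    using paraprod_top_block[OF assms, of kk V W i] unfolding T_def by simp
qed

lemma vcoef_paraprod_eq:
  assumes "1 \<le> k" "k \<le> 2^r"
  shows "vcoef (paraprod kk V W) r k
       = (\<lambda>j. matvec kk (spart_mat r V (dmid r k)) (vcoef W r k) j + (\<Sum>p<r. lower_block_coef kk V W r k p j))"
  using paraprod_vcoef[OF assms] by auto

lemma lower_block_coef_0: "lower_block_coef kk V W r k 0 = (\<lambda>i. 0)"
  by (simp add: lower_block_coef_def spart_mat_0 matvec_def)

lemma lower_block_coef_eq:
  fixes kk :: nat and V :: "real \<Rightarrow> nat \<Rightarrow> nat \<Rightarrow> real" and W :: "real \<Rightarrow> nat \<Rightarrow> real"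
  assumes "1 \<le> k" "k \<le> 2^r" "p < r" "1 \<le> p"
  defines "J \<equiv> ancestor r k p div 2"
  shows "lower_block_coef kk V W r k p
       = (\<lambda>i. (if even (ancestor r k p) then -2 else 2) * (2^p/2^(r+1))^2
              * matvec kk (\<lambda>i j. V ((real J + 1)/2^p) i j - V (real J/2^p) i j) (vcoef W p (J+1)) i)"
proof -
  have mid: "dleft r k \<le> dmid r k" "dmid r k \<le> dright r k" "dmid r k - dleft r k = 1/2^(r+1)"
    using dyadic_points[OF assms(1)] by simp_all
  have S: "(\<lambda>i j. spart_mat p V (dmid r k) i j - spart_mat p V (dleft r k) i j)
      = (\<lambda>i j. (2^p/2^(r+1)) * (V ((real J + 1)/2^p) i j - V (real J/2^p) i j))"
    using spart_mat_diff_left[OF assms(1-3) mid(1,2) assms(4)] mid(3) unfolding J_def by (simp add: fun_eq_iff)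
  have D: "(\<lambda>j. sdelta_vec p W (dmid r k) j - sdelta_vec p W (dleft r k) j)
      = (\<lambda>j. ((if even (ancestor r k p) then 1 else -1) * 2^p/2^(r+1)) * vcoef W p (J+1) j)"
    using sdelta_vec_diff_left[OF assms(1-3) mid(1,2)] mid(3) assms(4) unfolding J_def by (simp add: fun_eq_iff)
  show ?thesis
    unfolding lower_block_coef_def S D matvec_scale by (simp add: fun_eq_iff power2_eq_square)
qed

lemma vnorm_L2: "vnorm k x = L2_set x {..<k}"
  by (simp add: vnorm_def L2_set_def)

lemma vnorm_nonneg [simp]: "0 \<le> vnorm k x"
  by (simp add: vnorm_L2)

lemma vnorm_zero [simp]: "vnorm k (\<lambda>i. 0) = 0"
  by (simp add: vnorm_def)

lemma vnorm_add: "vnorm k (\<lambda>i. x i + y i) \<le> vnorm k x + vnorm k y"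
  unfolding vnorm_L2 by (rule L2_set_triangle_ineq)

lemma vnorm_scale: "vnorm k (\<lambda>i. c * x i) = \<bar>c\<bar> * vnorm k x"
proof -
  have "vnorm k (\<lambda>i. c * x i) = vnorm k (\<lambda>i. \<bar>c\<bar> * x i)"
    by (simp add: vnorm_def power_mult_distrib)
  also have "\<dots> = \<bar>c\<bar> * vnorm k x"
    unfolding vnorm_L2 by (simp add: L2_set_right_distrib)
  finally show ?thesis .
qed

lemma vnorm_diff: "vnorm k (\<lambda>i. x i - y i) \<le> vnorm k x + vnorm k y"
  using vnorm_add[of k x "\<lambda>i. - y i"] vnorm_scale[of k "-1" y] by simp

lemma vnorm_sum: "finite A \<Longrightarrow> vnorm k (\<lambda>i. \<Sum>p\<in>A. f p i) \<le> (\<Sum>p\<in>A. vnorm k (f p))"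
proof (induction A rule: finite_induct)
  case (insert a A)
  have "vnorm k (\<lambda>i. \<Sum>p\<in>insert a A. f p i) = vnorm k (\<lambda>i. f a i + (\<Sum>p\<in>A. f p i))"
    using insert by simp
  also have "\<dots> \<le> vnorm k (f a) + vnorm k (\<lambda>i. \<Sum>p\<in>A. f p i)" by (rule vnorm_add)
  also have "\<dots> \<le> vnorm k (f a) + (\<Sum>p\<in>A. vnorm k (f p))" using insert by simp
  finally show ?case using insert by simp
qed simp

lemma abs_le_vnorm: "j < k \<Longrightarrow> \<bar>x j\<bar> \<le> vnorm k x"
  unfolding vnorm_L2 using member_le_L2_set[of "{..<k}" j "\<lambda>i. \<bar>x i\<bar>"] by (simp add: L2_set_def)

definition entry_sum :: "nat \<Rightarrow> nat \<Rightarrow> (nat \<Rightarrow> nat \<Rightarrow> real) \<Rightarrow> real" where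
  "entry_sum m n A = (\<Sum>i<m. \<Sum>j<n. \<bar>A i j\<bar>)"

lemma matvec_entry_sum: "vnorm m (matvec n A x) \<le> entry_sum m n A * vnorm n x"
proof -
  have "vnorm m (matvec n A x) \<le> (\<Sum>i<m. \<bar>matvec n A x i\<bar>)"
    unfolding vnorm_L2 by (rule L2_set_le_sum_abs)
  also have "\<dots> \<le> (\<Sum>i<m. \<Sum>j<n. \<bar>A i j\<bar> * vnorm n x)"
  proof (rule sum_mono)
    fix i
    have "\<bar>matvec n A x i\<bar> \<le> (\<Sum>j<n. \<bar>A i j * x j\<bar>)" unfolding matvec_def by (rule sum_abs)
    also have "\<dots> \<le> (\<Sum>j<n. \<bar>A i j\<bar> * vnorm n x)"
      by (rule sum_mono) (auto simp: abs_mult intro: mult_left_mono abs_le_vnorm)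
    finally show "\<bar>matvec n A x i\<bar> \<le> (\<Sum>j<n. \<bar>A i j\<bar> * vnorm n x)" .
  qed
  also have "\<dots> = entry_sum m n A * vnorm n x" by (simp add: entry_sum_def sum_distrib_right)
  finally show ?thesis .
qed

lemma matvec_unit_le_entry_sum: "vnorm n x \<le> 1 \<Longrightarrow> vnorm m (matvec n A x) \<le> entry_sum m n A"
  using matvec_entry_sum[of m n A x] mult_left_le[of "vnorm n x" "entry_sum m n A"]
  by (simp add: entry_sum_def sum_nonneg)

lemma opnorm_upper: "vnorm n x \<le> 1 \<Longrightarrow> vnorm m (matvec n A x) \<le> opnorm m n A"
  unfolding opnorm_def
  by (rule cSup_upper) (auto intro!: bdd_aboveI[of _ "entry_sum m n A"] matvec_unit_le_entry_sum)

lemma opnorm_nonneg: "0 \<le> opnorm m n A"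
  using opnorm_upper[of n "\<lambda>i. 0" m A] by (simp add: matvec_def)

lemma opnorm_le_entry_sum: "opnorm m n A \<le> entry_sum m n A"
  unfolding opnorm_def
  by (rule cSup_least) (auto intro!: exI[of _ "\<lambda>i. 0"] matvec_unit_le_entry_sum)

lemma matvec_opnorm: "vnorm m (matvec n A x) \<le> opnorm m n A * vnorm n x"
proof (cases "vnorm n x = 0")
  case True
  then show ?thesis using matvec_entry_sum[of m n A x] opnorm_nonneg[of m n A] by simp
next
  case False
  define c where "c = vnorm n x"
  have c: "c > 0" using False c_def vnorm_nonneg[of n x] by linarith
  have "vnorm n (\<lambda>j. (1/c) * x j) = 1" using c unfolding vnorm_scale c_def by simp
  then have "vnorm m (matvec n A (\<lambda>j. (1/c) * x j)) \<le> opnorm m n A" by (intro opnorm_upper) simp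
  then have "(1/c) * vnorm m (matvec n A x) \<le> opnorm m n A"
    unfolding matvec_scale_right vnorm_scale using c by simp
  then show ?thesis using c unfolding c_def[symmetric] by (simp add: field_simps)
qed

text \<open>Unlike \<open>opnorm\<close>, an operator-norm bound is closed under the usual estimates without any
  supremum reasoning.\<close>

definition opbound :: "nat \<Rightarrow> nat \<Rightarrow> (nat \<Rightarrow> nat \<Rightarrow> real) \<Rightarrow> real \<Rightarrow> bool" where
  "opbound m n A K \<longleftrightarrow> (\<forall>x. vnorm m (matvec n A x) \<le> K * vnorm n x)"

lemma opboundD: "opbound m n A K \<Longrightarrow> vnorm m (matvec n A x) \<le> K * vnorm n x"
  by (simp add: opbound_def)

lemma opbound_opnorm: "opbound m n A (opnorm m n A)"
  by (simp add: opbound_def matvec_opnorm)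

lemma opbound_mono: "opbound m n A K \<Longrightarrow> K \<le> K' \<Longrightarrow> opbound m n A K'"
  unfolding opbound_def using mult_right_mono[of K K'] vnorm_nonneg order.trans by metis

lemma opbound_apply_le: "opbound m n A K \<Longrightarrow> 0 \<le> K \<Longrightarrow> vnorm n x \<le> X \<Longrightarrow> vnorm m (matvec n A x) \<le> K * X"
  by (meson opboundD mult_left_mono order_trans)

lemma opbound_add:
  assumes "opbound m n A K1" "opbound m n B K2"
  shows "opbound m n (\<lambda>i j. A i j + B i j) (K1 + K2)"
  unfolding opbound_def matvec_add_left
proof
  fix x
  have "vnorm m (\<lambda>i. matvec n A x i + matvec n B x i) \<le> vnorm m (matvec n A x) + vnorm m (matvec n B x)"
    by (rule vnorm_add)
  also have "\<dots> \<le> (K1 + K2) * vnorm n x"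
    using assms[THEN opboundD, of x] by (simp add: distrib_right)
  finally show "vnorm m (\<lambda>i. matvec n A x i + matvec n B x i) \<le> (K1 + K2) * vnorm n x" .
qed

lemma opbound_diff:
  assumes "opbound m n A K1" "opbound m n B K2"
  shows "opbound m n (\<lambda>i j. A i j - B i j) (K1 + K2)"
  unfolding opbound_def matvec_diff_left
proof
  fix x
  have "vnorm m (\<lambda>i. matvec n A x i - matvec n B x i) \<le> vnorm m (matvec n A x) + vnorm m (matvec n B x)"
    by (rule vnorm_diff)
  also have "\<dots> \<le> (K1 + K2) * vnorm n x"
    using assms[THEN opboundD, of x] by (simp add: distrib_right)
  finally show "vnorm m (\<lambda>i. matvec n A x i - matvec n B x i) \<le> (K1 + K2) * vnorm n x" .
qed

lemma opbound_scale: "opbound m n A K \<Longrightarrow> opbound m n (\<lambda>i j. c * A i j) (\<bar>c\<bar> * K)"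
  unfolding opbound_def matvec_scale_left vnorm_scale
  by (simp add: mult.assoc mult_left_mono)

lemma opbound_sum:
  assumes "finite P" "\<And>p. p \<in> P \<Longrightarrow> opbound m n (A p) (K p)"
  shows "opbound m n (\<lambda>i j. \<Sum>p\<in>P. A p i j) (\<Sum>p\<in>P. K p)"
  unfolding opbound_def matvec_sum_left
proof
  fix x
  have "vnorm m (\<lambda>i. \<Sum>p\<in>P. matvec n (A p) x i) \<le> (\<Sum>p\<in>P. vnorm m (matvec n (A p) x))"
    using vnorm_sum[OF assms(1)] by simp
  also have "\<dots> \<le> (\<Sum>p\<in>P. K p * vnorm n x)"
    using assms(2) by (intro sum_mono) (simp add: opbound_def)
  finally show "vnorm m (\<lambda>i. \<Sum>p\<in>P. matvec n (A p) x i) \<le> (\<Sum>p\<in>P. K p) * vnorm n x"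
    by (simp add: sum_distrib_right)
qed

section \<open>Geometric sums and increments of Hoelder functions\<close>

lemma geometric_powr_sum_le:
  assumes "0 < \<gamma>"
  shows "(\<Sum>p<r. 2 powr (real p * \<gamma>)) \<le> 2 powr (real r * \<gamma>) / (2 powr \<gamma> - 1)"
proof -
  define x where "x = (2::real) powr \<gamma>"
  have x1: "x > 1" unfolding x_def using assms by simp
  have e: "2 powr (real p * \<gamma>) = x ^ p" for p
    unfolding x_def by (simp add: powr_power mult.commute)
  have "(\<Sum>p<r. 2 powr (real p * \<gamma>)) = (x^r - 1)/(x - 1)" unfolding e
    using x1 by (intro geometric_sum) simp
  also have "\<dots> \<le> x^r/(x-1)" using x1 by (intro divide_right_mono) auto
  finally show ?thesis unfolding e x_def by simp
qed

text \<open>On a dyadic interval of level \<open>q\<close> only the blocks \<open>p < q\<close> of \<open>g\<close> vary, each of them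
  linearly with slope \<open>\<plusminus>2\<^sup>p\<close> times one coefficient (the block \<open>p = 0\<close> also carries \<open>g\<^sub>0\<^sub>0\<close>).\<close>

lemma dyadic_increment_eq:
  assumes "1 \<le> q" "J < 2^q"
  shows "g ((real J + 1)/2^q) - g (real J/2^q)
       = (\<Sum>p<q. (1/2^q) * ((if even (J div 2^(q - Suc p)) then 2^p else -(2^p))
                               * scoef g p (J div 2^(q - Suc p) div 2 + 1)
                             + (if p = 0 then 1 else 0) * scoef g 0 0))"
proof -
  obtain q0 where q0: "q = Suc q0" using assms(1) by (cases q) auto
  define e1 e2 where "e1 = real J/2^q" and "e2 = (real J + 1)/2^q"
  have e: "0 \<le> e1" "e1 \<le> e2" "e2 - e1 = 1/2^q"
    unfolding e1_def e2_def by (simp_all add: divide_right_mono field_simps)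
  have "g e2 - g e1 = spart g (int q0) e2 - spart g (int q0) e1"
    using spart_at_grid[of J q0 g] spart_at_grid[of "J + 1" q0 g] assms q0
    unfolding e1_def e2_def by (simp add: add.commute)
  also have "\<dots> = (\<Sum>p<q. sdelta g p e2 - sdelta g p e1)"
    using q0 by (simp add: spart_def sum_subtractf nat_add_distrib)
  also have "\<dots> = (\<Sum>p<q. (1/2^q) * ((if even (J div 2^(q - Suc p)) then 2^p else -(2^p))
                               * scoef g p (J div 2^(q - Suc p) div 2 + 1)
                             + (if p = 0 then 1 else 0) * scoef g 0 0))"
  proof (rule sum.cong[OF refl])
    fix p assume "p \<in> {..<q}"
    then have p: "p + 1 \<le> q" by simp
    have "q - (p + 1) = q - Suc p" by simp
    note C = dyadic_ancestor[OF assms(2) p, unfolded this]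
    have h1: "real (J div 2^(q - Suc p)) \<le> 2^(p+1)*e1" using C(2) unfolding e1_def by simp
    have h2: "2^(p+1)*e2 \<le> real (J div 2^(q - Suc p)) + 1" using C(3) unfolding e2_def by simp
    have mono: "2^(p+1)*e1 \<le> 2^(p+1)*e2" using e by simp
    have "sdelta g p e2 - sdelta g p e1 = (e2 - e1) * ((if even (J div 2^(q - Suc p)) then 2^p else -(2^p))
        * scoef g p (J div 2^(q - Suc p) div 2 + 1) + (if p = 0 then scoef g 0 0 else 0))"
      by (rule sdelta_diff_on_dyadic_interval[OF C(1)]) (use h1 h2 e mono in linarith)+
    then show "sdelta g p e2 - sdelta g p e1 = (1/2^q) * ((if even (J div 2^(q - Suc p)) then 2^p else -(2^p))
                               * scoef g p (J div 2^(q - Suc p) div 2 + 1)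
                             + (if p = 0 then 1 else 0) * scoef g 0 0)"
      unfolding e(3) by simp
  qed
  finally show ?thesis unfolding e1_def e2_def .
qed

definition incr_const :: "real \<Rightarrow> real" where "incr_const a = 1 + 1/(2 powr (1 - a) - 1)"

lemma incr_const_pos: "a < 1 \<Longrightarrow> 0 < incr_const a"
  unfolding incr_const_def by (simp add: add_pos_pos)

lemma dyadic_increment_weights_le:
  assumes "0 < \<alpha>" "\<alpha> < 1" "0 \<le> V"
  shows "(\<Sum>p<q. (1/2^q) * (2^p * (V * 2 powr (-(real p * \<alpha>))) + (if p = 0 then V else 0)))
       \<le> incr_const \<alpha> * V * 2 powr (-(real q * \<alpha>))"
proof -
  have pow: "(2::real)^p = 2 powr real p" for p by (simp add: powr_realpow)
  define G where "G = 2 powr (real q * (1 - \<alpha>)) / (2 powr (1 - \<alpha>) - 1)"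
  have "(\<Sum>p<q. 2^p * (V * 2 powr (-(real p * \<alpha>)))) = V * (\<Sum>p<q. 2 powr (real p * (1 - \<alpha>)))"
    by (simp add: sum_distrib_left pow powr_add[symmetric] algebra_simps)
  also have "\<dots> \<le> V * G"
    unfolding G_def using assms by (intro mult_left_mono geometric_powr_sum_le) simp_all
  finally have "(\<Sum>p<q. 2^p * (V * 2 powr (-(real p * \<alpha>))) + (if p = 0 then V else 0)) \<le> V * G + V"
    using assms(3) by (simp add: sum.distrib sum.delta add_mono)
  then have "(\<Sum>p<q. (1/2^q) * (2^p * (V * 2 powr (-(real p * \<alpha>))) + (if p = 0 then V else 0)))
      \<le> (1/2^q) * (V * G + V)"
    unfolding sum_distrib_left[symmetric] by (rule mult_left_mono) simp_all
  also have "\<dots> = V * 2 powr (-(real q * \<alpha>)) / (2 powr (1 - \<alpha>) - 1) + V / 2 powr real q"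
    unfolding G_def by (simp add: pow field_simps powr_add[symmetric] powr_diff[symmetric])
  also have "V / 2 powr real q \<le> V * 2 powr (-(real q * \<alpha>))"
  proof -
    have "2 powr (- real q) \<le> 2 powr (-(real q * \<alpha>))" using assms by (simp add: mult_left_le)
    then show ?thesis using assms(3) by (simp add: powr_minus divide_inverse mult_left_mono)
  qed
  finally show ?thesis unfolding incr_const_def by (simp add: algebra_simps)
qed

lemma increment_opbound:
  assumes Vb: "\<And>p q. q \<le> 2^p \<Longrightarrow> opbound n d (mcoef v p q) (V * 2 powr (-(real p * \<alpha>)))"
    and "0 \<le> V" "0 < \<alpha>" "\<alpha> < 1" and q: "1 \<le> q" "J < 2^q"
  shows "opbound n d (\<lambda>i j. v ((real J + 1)/2^q) i j - v (real J/2^q) i j)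
           (incr_const \<alpha> * V * 2 powr (-(real q * \<alpha>)))"
proof -
  define a where "a p = J div 2^(q - Suc p)" for p
  define sg :: "nat \<Rightarrow> real" where "sg p = (if even (a p) then 2^p else -(2^p))" for p
  define z :: "nat \<Rightarrow> real" where "z p = (if p = 0 then 1 else 0)" for p
  have "opbound n d (\<lambda>i j. (1/2^q) * (sg p * mcoef v p (a p div 2 + 1) i j + z p * mcoef v 0 0 i j))
          ((1/2^q) * (2^p * (V * 2 powr (-(real p * \<alpha>))) + (if p = 0 then V else 0)))"
    if "p \<in> {..<q}" for p
  proof -
    have "q - (p + 1) = q - Suc p" by simp
    with dyadic_ancestor(1)[OF q(2), of "p + 1"] that have "a p < 2^(p+1)" unfolding a_def by simp
    then have M: "a p div 2 + 1 \<le> 2^p" using half_dyadic_index by (simp add: Suc_leI)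
    have "\<bar>sg p\<bar> = 2^p" "\<bar>z p\<bar> * V = (if p = 0 then V else 0)"
      by (simp_all add: sg_def z_def)
    then have "opbound n d (\<lambda>i j. sg p * mcoef v p (a p div 2 + 1) i j + z p * mcoef v 0 0 i j)
        (2^p * (V * 2 powr (-(real p * \<alpha>))) + (if p = 0 then V else 0))"
      using opbound_add[OF opbound_scale[OF Vb[OF M], where c="sg p"] opbound_scale[OF Vb[of 0 0], where c="z p"]]
      by simp
    from opbound_scale[OF this, where c="1/2^q"] show ?thesis by simp
  qed
  then have "opbound n d (\<lambda>i j. \<Sum>p<q. (1/2^q) * (sg p * mcoef v p (a p div 2 + 1) i j + z p * mcoef v 0 0 i j))
      (\<Sum>p<q. (1/2^q) * (2^p * (V * 2 powr (-(real p * \<alpha>))) + (if p = 0 then V else 0)))"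
    by (rule opbound_sum[OF finite_lessThan])
  moreover have "(\<lambda>i j. v ((real J + 1)/2^q) i j - v (real J/2^q) i j)
      = (\<lambda>i j. \<Sum>p<q. (1/2^q) * (sg p * mcoef v p (a p div 2 + 1) i j + z p * mcoef v 0 0 i j))"
    unfolding mcoef_def sg_def a_def z_def using dyadic_increment_eq[OF q, of "\<lambda>s. v s _ _"] by simp
  ultimately show ?thesis
    using opbound_mono dyadic_increment_weights_le[OF assms(3,4,2)] by auto
qed

lemma weighted_geometric_sum_le:
  assumes "0 < \<gamma>" "\<gamma> < 2" "0 \<le> K"
  shows "(\<Sum>p<r. 2 * (2^p/2^(r+1))^2 * (K * 2 powr (-(real p * \<gamma>))))
        \<le> K / (2 * (2 powr (2 - \<gamma>) - 1)) * 2 powr (-(real r * \<gamma>))"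
proof -
  have pow: "(2::real)^n = 2 powr real n" for n by (simp add: powr_realpow)
  have summand: "2 * (2^p/2^(r+1))^2 * (K * 2 powr (-(real p * \<gamma>)))
      = K * 2 powr (-(2 * real r + 1)) * 2 powr (real p * (2 - \<gamma>))" for p
  proof -
    have "2 * ((2::real)^p/2^(r+1))^2 = 2 powr (1 + 2 * (real p - real r - 1))"
      unfolding pow by (simp add: power2_eq_square powr_add[symmetric] powr_diff[symmetric] powr_mult_base algebra_simps)
    then show ?thesis by (simp add: powr_add[symmetric] algebra_simps)
  qed
  have exponent: "2 powr (-(2*real r + 1)) * 2 powr (real r * (2 - \<gamma>)) = (2::real) powr (-(real r * \<gamma>)) / 2"
  proof -
    have "2 powr (-(2*real r + 1)) * 2 powr (real r * (2 - \<gamma>)) = (2::real) powr (-1 - real r * \<gamma>)"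
      by (simp add: powr_add[symmetric] algebra_simps)
    also have "\<dots> = 2 powr (-(real r * \<gamma>)) / 2" by (simp add: powr_diff powr_minus_divide)
    finally show ?thesis .
  qed
  have "(\<Sum>p<r. 2 * (2^p/2^(r+1))^2 * (K * 2 powr (-(real p * \<gamma>))))
      = K * 2 powr (-(2 * real r + 1)) * (\<Sum>p<r. 2 powr (real p * (2 - \<gamma>)))"
    unfolding summand by (simp add: sum_distrib_left)
  also have "\<dots> \<le> K * 2 powr (-(2 * real r + 1)) * (2 powr (real r * (2 - \<gamma>)) / (2 powr (2 - \<gamma>) - 1))"
    using assms by (intro mult_left_mono geometric_powr_sum_le) simp_all
  also have "\<dots> = K * (2 powr (-(2*real r + 1)) * 2 powr (real r * (2 - \<gamma>))) / (2 powr (2 - \<gamma>) - 1)"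
    by simp
  also have "\<dots> = K / (2 * (2 powr (2 - \<gamma>) - 1)) * 2 powr (-(real r * \<gamma>))"
    unfolding exponent by simp
  finally show ?thesis .
qed
section \<open>The commutator estimate\<close>

lemma midpoint_product_identity:
  "matvec n (\<lambda>i j. (A1 i j + A2 i j)/2) (\<lambda>j. matvec d (\<lambda>j l. (B1 j l + B2 j l)/2) w j + e j) i
   - matvec d (\<lambda>i l. (matmul n A1 B1 i l + matmul n A2 B2 i l)/2) w i
   = -(1/4) * matvec n (\<lambda>i j. A2 i j - A1 i j) (matvec d (\<lambda>j l. B2 j l - B1 j l) w) i
     + matvec n (\<lambda>i j. (A1 i j + A2 i j)/2) e i"
  by (simp add: matvec_linear field_simps)

lemma increment_product_identity:
  "matvec n (\<lambda>i j. A2 i j - A1 i j) (\<lambda>j. matvec d (\<lambda>j l. (B1 j l + B2 j l)/2) w j + e j) i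
   - matvec d (\<lambda>i l. matmul n A2 B2 i l - matmul n A1 B1 i l) w i
   = -(1/2) * matvec n (\<lambda>i j. A1 i j + A2 i j) (matvec d (\<lambda>j l. B2 j l - B1 j l) w) i
     + matvec n (\<lambda>i j. A2 i j - A1 i j) e i"
  by (simp add: matvec_linear field_simps)

lemma product_plus_remainder_bound:
  assumes "opbound m n A KA" "opbound n d B KB" "opbound m n A' KA'" "vnorm d x \<le> X" "vnorm n e \<le> E"
    and "0 \<le> KA" "0 \<le> KB" "0 \<le> KA'"
  shows "vnorm m (\<lambda>i. c * matvec n A (matvec d B x) i + matvec n A' e i) \<le> \<bar>c\<bar> * KA * KB * X + KA' * E"
proof -
  have "vnorm m (\<lambda>i. c * matvec n A (matvec d B x) i + matvec n A' e i)
      \<le> \<bar>c\<bar> * vnorm m (matvec n A (matvec d B x)) + vnorm m (matvec n A' e)"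
    using vnorm_add[of m "\<lambda>i. c * matvec n A (matvec d B x) i" "matvec n A' e"] by (simp add: vnorm_scale)
  also have "\<dots> \<le> \<bar>c\<bar> * (KA * (KB * X)) + KA' * E"
    using assms by (intro add_mono mult_left_mono opbound_apply_le) simp_all
  finally show ?thesis by (simp add: mult.assoc)
qed

lemma powr_minus_mult_add: "(2::real) powr (-(x * a)) * 2 powr (-(x * b)) = 2 powr (-(x * (a + b)))"
  by (simp add: powr_add[symmetric] algebra_simps)

definition remainder_const :: "real \<Rightarrow> real \<Rightarrow> real" where
  "remainder_const a b = incr_const a / (2 * (2 powr (2 - (a + b)) - 1))"

definition commutator_const :: "real \<Rightarrow> real \<Rightarrow> real" where
  "commutator_const a b = incr_const a / 2 + remainder_const a b
     + (incr_const a + 2 * remainder_const a b) / (2 * (2 powr (2 - (a + b)) - 1))"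

lemma remainder_const_nonneg:
  assumes "a < 1" "a + b < 2"
  shows "0 \<le> remainder_const a b"
proof -
  have "1 < 2 powr (2 - (a + b))" using assms(2) by simp
  then show ?thesis using incr_const_pos[OF assms(1)] by (simp add: remainder_const_def)
qed

lemma commutator_const_pos:
  assumes "a < 1" "a + b < 2"
  shows "0 < commutator_const a b"
proof -
  have "1 < 2 powr (2 - (a + b))" using assms(2) by simp
  then show ?thesis using incr_const_pos[OF assms(1)] remainder_const_nonneg[OF assms]
    by (simp add: commutator_const_def add_pos_nonneg)
qed

context
  fixes n m d :: nat and u v :: "real \<Rightarrow> nat \<Rightarrow> nat \<Rightarrow> real" and w :: "real \<Rightarrow> nat \<Rightarrow> real"
    and \<alpha> \<beta> U V W :: real
  assumes a: "0 < \<alpha>" "\<alpha> < 1" and b: "0 < \<beta>" "\<beta> < 1"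
    and U: "0 \<le> U" and Ub: "\<And>t. 0 \<le> t \<Longrightarrow> t \<le> 1 \<Longrightarrow> opbound m n (u t) U"
    and V: "0 \<le> V" and Vb: "\<And>p q. q \<le> 2^p \<Longrightarrow> opbound n d (mcoef v p q) (V * 2 powr (-(real p * \<alpha>)))"
    and W: "0 \<le> W" and Wb: "\<And>p q. q \<le> 2^p \<Longrightarrow> vnorm d (vcoef w p q) \<le> W * 2 powr (-(real p * \<beta>))"
begin

lemma constants_nonneg: "0 < incr_const \<alpha>" "0 \<le> remainder_const \<alpha> \<beta>"
  using incr_const_pos remainder_const_nonneg a b by auto

lemma u_opbound_at_dyadic:
  assumes "J < 2^q"
  shows "opbound m n (u (real J/2^q)) U" "opbound m n (u ((real J + 1)/2^q)) U"
proof -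
  have "real (J + 1) \<le> real ((2::nat)^q)" using assms by (intro of_nat_mono) simp
  then have "real J + 1 \<le> 2^q" by simp
  moreover from this have "real J \<le> 2^q" by linarith
  ultimately show "opbound m n (u (real J/2^q)) U" "opbound m n (u ((real J + 1)/2^q)) U"
    by (auto intro!: Ub)
qed

lemma increment_vcoef_bound:
  assumes "1 \<le> q" "J < 2^q"
  shows "vnorm n (matvec d (\<lambda>i j. v ((real J + 1)/2^q) i j - v (real J/2^q) i j) (vcoef w q (J+1)))
       \<le> incr_const \<alpha> * V * W * 2 powr (-(real q * (\<alpha> + \<beta>)))"
proof -
  have "vnorm n (matvec d (\<lambda>i j. v ((real J + 1)/2^q) i j - v (real J/2^q) i j) (vcoef w q (J+1)))
      \<le> incr_const \<alpha> * V * 2 powr (-(real q * \<alpha>)) * (W * 2 powr (-(real q * \<beta>)))"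
    using assms constants_nonneg V
    by (intro opbound_apply_le increment_opbound[OF Vb V a] Wb) simp_all
  also have "\<dots> = incr_const \<alpha> * V * W * (2 powr (-(real q * \<alpha>)) * 2 powr (-(real q * \<beta>)))"
    by (simp only: ac_simps)
  finally show ?thesis unfolding powr_minus_mult_add .
qed

lemma lower_block_coef_bound:
  assumes "1 \<le> k" "k \<le> 2^r" "p < r"
  shows "vnorm n (lower_block_coef d v w r k p)
       \<le> 2 * (2^p/2^(r+1))^2 * (incr_const \<alpha> * V * W * 2 powr (-(real p * (\<alpha> + \<beta>))))"
proof (cases "p = 0")
  case True
  then show ?thesis using constants_nonneg V W by (simp add: lower_block_coef_0)
next
  case False
  then have p: "1 \<le> p" by simp
  have "\<bar>(if even (ancestor r k p) then -2 else 2) * ((2::real)^p/2^(r+1))^2\<bar> = 2 * (2^p/2^(r+1))^2"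
    by simp
  then show ?thesis
    unfolding lower_block_coef_eq[OF assms p] vnorm_scale
    using increment_vcoef_bound[OF p ancestor_half_bound[OF assms]] by (simp add: mult_left_mono)
qed

lemma lower_blocks_bound:
  assumes "1 \<le> k" "k \<le> 2^r"
  shows "vnorm n (\<lambda>i. \<Sum>p<r. lower_block_coef d v w r k p i)
       \<le> remainder_const \<alpha> \<beta> * V * W * 2 powr (-(real r * (\<alpha> + \<beta>)))"
proof -
  have "vnorm n (\<lambda>i. \<Sum>p<r. lower_block_coef d v w r k p i) \<le> (\<Sum>p<r. vnorm n (lower_block_coef d v w r k p))"
    by (rule vnorm_sum) simp
  also have "\<dots> \<le> (\<Sum>p<r. 2 * (2^p/2^(r+1))^2 * (incr_const \<alpha> * V * W * 2 powr (-(real p * (\<alpha> + \<beta>)))))"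
    by (rule sum_mono) (use lower_block_coef_bound[OF assms] in simp)
  also have "\<dots> \<le> incr_const \<alpha> * V * W / (2 * (2 powr (2 - (\<alpha> + \<beta>)) - 1)) * 2 powr (-(real r * (\<alpha> + \<beta>)))"
    by (rule weighted_geometric_sum_le) (use a b constants_nonneg V W in auto)
  finally show ?thesis unfolding remainder_const_def by simp
qed

text \<open>The commutator cancels the leading term of the coefficients of \<open>\<pi>\<^sub><(v,w)\<close>: what remains is
  controlled by the increments of \<open>u\<close> and \<open>v\<close> over a dyadic interval, and by the lower blocks.\<close>

lemma commutator_lower_block_bound:
  assumes "1 \<le> k" "k \<le> 2^r" "p < r"
  shows "vnorm m (\<lambda>i. lower_block_coef n u (paraprod d v w) r k p i - lower_block_coef d (\<lambda>s. matmul n (u s) (v s)) w r k p i)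
       \<le> 2 * (2^p/2^(r+1))^2 * ((incr_const \<alpha> + 2 * remainder_const \<alpha> \<beta>) * U * V * W * 2 powr (-(real p * (\<alpha> + \<beta>))))"
proof (cases "p = 0")
  case True
  then show ?thesis using constants_nonneg U V W by (simp add: lower_block_coef_0)
next
  case False
  then have p: "1 \<le> p" by simp
  define J where "J = ancestor r k p div 2"
  have J: "J < 2^p" using ancestor_half_bound[OF assms] unfolding J_def .
  define A1 A2 B1 B2 where "A1 = u (real J/2^p)" and "A2 = u ((real J + 1)/2^p)"
    and "B1 = v (real J/2^p)" and "B2 = v ((real J + 1)/2^p)"
  define c :: real where "c = (if even (ancestor r k p) then -2 else 2) * (2^p/2^(r+1))^2"
  define e where "e = (\<lambda>j. \<Sum>q<p. lower_block_coef d v w p (J+1) q j)"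
  have coef_vw: "vcoef (paraprod d v w) p (J+1) = (\<lambda>j. matvec d (\<lambda>j l. (B1 j l + B2 j l)/2) (vcoef w p (J+1)) j + e j)"
    using vcoef_paraprod_eq[of "J+1" p] J spart_mat_at_midpoint[OF p J, of v] unfolding e_def B1_def B2_def by simp
  have "(\<lambda>i. lower_block_coef n u (paraprod d v w) r k p i - lower_block_coef d (\<lambda>s. matmul n (u s) (v s)) w r k p i)
      = (\<lambda>i. c * (matvec n (\<lambda>i j. A2 i j - A1 i j) (vcoef (paraprod d v w) p (J+1)) i
                  - matvec d (\<lambda>i l. matmul n A2 B2 i l - matmul n A1 B1 i l) (vcoef w p (J+1)) i))"
    unfolding lower_block_coef_eq[OF assms p] J_def[symmetric] c_def A1_def A2_def B1_def B2_def
    by (simp add: fun_eq_iff right_diff_distrib)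
  also have "\<dots> = (\<lambda>i. c * (-(1/2) * matvec n (\<lambda>i j. A1 i j + A2 i j) (matvec d (\<lambda>j l. B2 j l - B1 j l) (vcoef w p (J+1))) i
                   + matvec n (\<lambda>i j. A2 i j - A1 i j) e i))"
    unfolding coef_vw increment_product_identity ..
  finally have eq: "(\<lambda>i. lower_block_coef n u (paraprod d v w) r k p i - lower_block_coef d (\<lambda>s. matmul n (u s) (v s)) w r k p i)
      = (\<lambda>i. c * (-(1/2) * matvec n (\<lambda>i j. A1 i j + A2 i j) (matvec d (\<lambda>j l. B2 j l - B1 j l) (vcoef w p (J+1))) i
                   + matvec n (\<lambda>i j. A2 i j - A1 i j) e i))" .
  have c: "\<bar>c\<bar> = 2 * (2^p/2^(r+1))^2" by (simp add: c_def)
  have "vnorm m (\<lambda>i. -(1/2) * matvec n (\<lambda>i j. A1 i j + A2 i j) (matvec d (\<lambda>j l. B2 j l - B1 j l) (vcoef w p (J+1))) i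
                   + matvec n (\<lambda>i j. A2 i j - A1 i j) e i)
      \<le> \<bar>-(1/2)\<bar> * (U + U) * (incr_const \<alpha> * V * 2 powr (-(real p * \<alpha>))) * (W * 2 powr (-(real p * \<beta>)))
        + (U + U) * (remainder_const \<alpha> \<beta> * V * W * 2 powr (-(real p * (\<alpha> + \<beta>))))"
  proof (rule product_plus_remainder_bound)
    have A: "opbound m n A1 U" "opbound m n A2 U"
      unfolding A1_def A2_def using u_opbound_at_dyadic[OF J] .
    show "opbound m n (\<lambda>i j. A1 i j + A2 i j) (U + U)" by (rule opbound_add[OF A])
    show "opbound m n (\<lambda>i j. A2 i j - A1 i j) (U + U)" by (rule opbound_diff[OF A(2,1)])
    show "opbound n d (\<lambda>j l. B2 j l - B1 j l) (incr_const \<alpha> * V * 2 powr (-(real p * \<alpha>)))"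
      unfolding B1_def B2_def by (rule increment_opbound[OF Vb V a p J])
    show "vnorm d (vcoef w p (J+1)) \<le> W * 2 powr (-(real p * \<beta>))" using Wb J by simp
    show "vnorm n e \<le> remainder_const \<alpha> \<beta> * V * W * 2 powr (-(real p * (\<alpha> + \<beta>)))"
      unfolding e_def using lower_blocks_bound J by simp
  qed (use U V constants_nonneg in simp_all)
  also have "\<dots> = (incr_const \<alpha> + 2 * remainder_const \<alpha> \<beta>) * U * V * W * 2 powr (-(real p * (\<alpha> + \<beta>)))"
    unfolding powr_minus_mult_add[symmetric] by (simp add: algebra_simps)
  finally have "vnorm m (\<lambda>i. -(1/2) * matvec n (\<lambda>i j. A1 i j + A2 i j) (matvec d (\<lambda>j l. B2 j l - B1 j l) (vcoef w p (J+1))) i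
                   + matvec n (\<lambda>i j. A2 i j - A1 i j) e i)
      \<le> (incr_const \<alpha> + 2 * remainder_const \<alpha> \<beta>) * U * V * W * 2 powr (-(real p * (\<alpha> + \<beta>)))" .
  then show ?thesis
    unfolding eq vnorm_scale c by (rule mult_left_mono) simp
qed

lemma commutator_top_bound:
  assumes "1 \<le> k" "k \<le> 2^r"
  shows "vnorm m (\<lambda>i. matvec n (spart_mat r u (dmid r k)) (vcoef (paraprod d v w) r k) i
                      - matvec d (spart_mat r (\<lambda>s. matmul n (u s) (v s)) (dmid r k)) (vcoef w r k) i)
       \<le> (incr_const \<alpha> / 2 + remainder_const \<alpha> \<beta>) * U * V * W * 2 powr (-(real r * (\<alpha> + \<beta>)))"
proof (cases "r = 0")
  case True
  have "(\<lambda>i. matvec n (spart_mat r u (dmid r k)) (vcoef (paraprod d v w) r k) i - matvec d (spart_mat r (\<lambda>s. matmul n (u s) (v s)) (dmid r k)) (vcoef w r k) i)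
      = (\<lambda>i. 0)"
    unfolding vcoef_paraprod_eq[OF assms] using True by (simp add: spart_mat_0 matvec_matmul)
  then show ?thesis using constants_nonneg U V W by simp
next
  case False
  then have r: "1 \<le> r" by simp
  define J where "J = k - 1"
  have J: "J < 2^r" and k: "k = J + 1" using assms unfolding J_def by simp_all
  define A1 A2 B1 B2 where "A1 = u (real J/2^r)" and "A2 = u ((real J + 1)/2^r)"
    and "B1 = v (real J/2^r)" and "B2 = v ((real J + 1)/2^r)"
  define e where "e = (\<lambda>j. \<Sum>p<r. lower_block_coef d v w r k p j)"
  have coef_vw: "vcoef (paraprod d v w) r k = (\<lambda>j. matvec d (\<lambda>j l. (B1 j l + B2 j l)/2) (vcoef w r k) j + e j)"
    using vcoef_paraprod_eq[OF assms] spart_mat_at_midpoint[OF r J, of v, folded k]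
    unfolding e_def B1_def B2_def by simp
  have mu: "spart_mat r u (dmid r k) = (\<lambda>i j. (A1 i j + A2 i j)/2)"
    using spart_mat_at_midpoint[OF r J, of u, folded k] unfolding A1_def A2_def .
  have muv: "spart_mat r (\<lambda>s. matmul n (u s) (v s)) (dmid r k) = (\<lambda>i l. (matmul n A1 B1 i l + matmul n A2 B2 i l)/2)"
    using spart_mat_at_midpoint[OF r J, of "\<lambda>s. matmul n (u s) (v s)", folded k] unfolding A1_def A2_def B1_def B2_def .
  have A: "opbound m n A1 U" "opbound m n A2 U"
    unfolding A1_def A2_def using u_opbound_at_dyadic[OF J] .
  have "vnorm m (\<lambda>i. -(1/4) * matvec n (\<lambda>i j. A2 i j - A1 i j) (matvec d (\<lambda>j l. B2 j l - B1 j l) (vcoef w r k)) i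
                     + matvec n (\<lambda>i j. (A1 i j + A2 i j)/2) e i)
      \<le> \<bar>-(1/4)\<bar> * (U + U) * (incr_const \<alpha> * V * 2 powr (-(real r * \<alpha>))) * (W * 2 powr (-(real r * \<beta>)))
        + (1/2 * U + 1/2 * U) * (remainder_const \<alpha> \<beta> * V * W * 2 powr (-(real r * (\<alpha> + \<beta>))))"
  proof (rule product_plus_remainder_bound)
    show "opbound m n (\<lambda>i j. A2 i j - A1 i j) (U + U)" by (rule opbound_diff[OF A(2) A(1)])
    have "opbound m n (\<lambda>i j. 1/2 * A1 i j + 1/2 * A2 i j) (\<bar>1/2\<bar> * U + \<bar>1/2\<bar> * U)"
      by (rule opbound_add[OF opbound_scale[OF A(1)] opbound_scale[OF A(2)]])
    then show "opbound m n (\<lambda>i j. (A1 i j + A2 i j)/2) (1/2 * U + 1/2 * U)"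
      by (simp add: add_divide_distrib)
    show "opbound n d (\<lambda>j l. B2 j l - B1 j l) (incr_const \<alpha> * V * 2 powr (-(real r * \<alpha>)))"
      unfolding B1_def B2_def by (rule increment_opbound[OF Vb V a r J])
    show "vnorm d (vcoef w r k) \<le> W * 2 powr (-(real r * \<beta>))" using Wb assms by simp
    show "vnorm n e \<le> remainder_const \<alpha> \<beta> * V * W * 2 powr (-(real r * (\<alpha> + \<beta>)))"
      unfolding e_def by (rule lower_blocks_bound[OF assms])
  qed (use U V constants_nonneg in simp_all)
  also have "\<dots> = (incr_const \<alpha> / 2 + remainder_const \<alpha> \<beta>) * U * V * W * 2 powr (-(real r * (\<alpha> + \<beta>)))"
    unfolding powr_minus_mult_add[symmetric] by (simp add: algebra_simps)
  finally show ?thesis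
    unfolding coef_vw mu muv midpoint_product_identity .
qed

lemma commutator_vcoef_bound:
  assumes "q \<le> 2^p"
  shows "vnorm m (vcoef (\<lambda>t i. paraprod n u (paraprod d v w) t i - paraprod d (\<lambda>s. matmul n (u s) (v s)) w t i) p q)
       \<le> commutator_const \<alpha> \<beta> * U * V * W * 2 powr (-(real p * (\<alpha> + \<beta>)))"
proof (cases "q = 0")
  case True
  have "vcoef (\<lambda>t i. paraprod n u (paraprod d v w) t i - paraprod d (\<lambda>s. matmul n (u s) (v s)) w t i) p q = (\<lambda>i. 0)"
    using True by (auto simp: vcoef_def scoef_def paraprod_at_0 paraprod_at_1 matvec_matmul)
  then show ?thesis
    using commutator_const_pos[of \<alpha> \<beta>] a b U V W by simp
next
  case False
  then have k: "1 \<le> q" by simp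
  define top where "top = (\<lambda>i. matvec n (spart_mat p u (dmid p q)) (vcoef (paraprod d v w) p q) i
                               - matvec d (spart_mat p (\<lambda>s. matmul n (u s) (v s)) (dmid p q)) (vcoef w p q) i)"
  define low where "low p' = (\<lambda>i. lower_block_coef n u (paraprod d v w) p q p' i - lower_block_coef d (\<lambda>s. matmul n (u s) (v s)) w p q p' i)" for p'
  define K where "K = (incr_const \<alpha> + 2 * remainder_const \<alpha> \<beta>) * U * V * W"
  have "vcoef (\<lambda>t i. paraprod n u (paraprod d v w) t i - paraprod d (\<lambda>s. matmul n (u s) (v s)) w t i) p q
      = (\<lambda>i. vcoef (paraprod n u (paraprod d v w)) p q i - vcoef (paraprod d (\<lambda>s. matmul n (u s) (v s)) w) p q i)"
    by (simp add: fun_eq_iff vcoef_eq[OF k])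
  also have "\<dots> = (\<lambda>i. top i + (\<Sum>p'<p. low p' i))"
    unfolding paraprod_vcoef[OF k assms] top_def low_def by (simp add: sum_subtractf fun_eq_iff)
  finally have eq: "vcoef (\<lambda>t i. paraprod n u (paraprod d v w) t i - paraprod d (\<lambda>s. matmul n (u s) (v s)) w t i) p q = (\<lambda>i. top i + (\<Sum>p'<p. low p' i))" .
  have low: "vnorm m (\<lambda>i. \<Sum>p'<p. low p' i) \<le> K / (2 * (2 powr (2 - (\<alpha> + \<beta>)) - 1)) * 2 powr (-(real p * (\<alpha> + \<beta>)))"
  proof -
    have "vnorm m (\<lambda>i. \<Sum>p'<p. low p' i) \<le> (\<Sum>p'<p. vnorm m (low p'))"
      by (rule vnorm_sum) simp
    also have "\<dots> \<le> (\<Sum>p'<p. 2 * (2^p'/2^(p+1))^2 * (K * 2 powr (-(real p' * (\<alpha> + \<beta>)))))"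
      unfolding low_def K_def using commutator_lower_block_bound[OF k assms] by (intro sum_mono) (simp add: mult.assoc)
    also have "\<dots> \<le> K / (2 * (2 powr (2 - (\<alpha> + \<beta>)) - 1)) * 2 powr (-(real p * (\<alpha> + \<beta>)))"
      unfolding K_def using a b constants_nonneg U V W by (intro weighted_geometric_sum_le) auto
    finally show ?thesis .
  qed
  have "vnorm m (vcoef (\<lambda>t i. paraprod n u (paraprod d v w) t i - paraprod d (\<lambda>s. matmul n (u s) (v s)) w t i) p q)
      \<le> vnorm m top + vnorm m (\<lambda>i. \<Sum>p'<p. low p' i)"
    unfolding eq by (rule vnorm_add)
  also have "\<dots> \<le> (incr_const \<alpha> / 2 + remainder_const \<alpha> \<beta>) * U * V * W * 2 powr (-(real p * (\<alpha> + \<beta>)))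
      + K / (2 * (2 powr (2 - (\<alpha> + \<beta>)) - 1)) * 2 powr (-(real p * (\<alpha> + \<beta>)))"
    using commutator_top_bound[OF k assms, folded top_def] low by (rule add_mono)
  also have "\<dots> = commutator_const \<alpha> \<beta> * U * V * W * 2 powr (-(real p * (\<alpha> + \<beta>)))"
    unfolding commutator_const_def K_def by (simp add: distrib_right)
  finally show ?thesis .
qed

end

lemma opnorm_le_supnorm_mat:
  assumes "cont_mat m n u" "0 \<le> t" "t \<le> 1"
  shows "opnorm m n (u t) \<le> supnorm_mat m n u"
proof -
  have "continuous_on {0..1} (\<lambda>t. entry_sum m n (u t))"
    using assms(1) unfolding cont_mat_def entry_sum_def by (auto intro!: continuous_intros)
  then obtain B where "\<And>t. t \<in> {0..1} \<Longrightarrow> norm (entry_sum m n (u t)) \<le> B"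
    using continuous_on_compact_bound[OF compact_Icc] by blast
  then have "bdd_above ((\<lambda>t. opnorm m n (u t)) ` {0..1})"
    by (intro bdd_aboveI[of _ B]) (force intro: order_trans[OF opnorm_le_entry_sum])
  then show ?thesis unfolding supnorm_mat_def using assms(2,3) by (intro cSup_upper) auto
qed

lemma supnorm_mat_nonneg: "cont_mat m n u \<Longrightarrow> 0 \<le> supnorm_mat m n u"
  using opnorm_le_supnorm_mat[of m n u 0] opnorm_nonneg[of m n "u 0"] by simp

lemma supnorm_mat_opbound:
  "cont_mat m n u \<Longrightarrow> 0 \<le> t \<Longrightarrow> t \<le> 1 \<Longrightarrow> opbound m n (u t) (supnorm_mat m n u)"
  using opnorm_le_supnorm_mat opbound_mono[OF opbound_opnorm] by blast

lemma opnorm_mcoef_le_hnorm_mat: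
  assumes "bdd_above (hset_mat a m n f)" "q \<le> 2^p"
  shows "2 powr (real p * a) * opnorm m n (mcoef f p q) \<le> hnorm_mat a m n f"
  unfolding hnorm_mat_def by (rule cSup_upper) (use assms in \<open>auto simp: hset_mat_def\<close>)

lemma mcoef_opbound:
  assumes "bdd_above (hset_mat a m n f)" "q \<le> 2^p"
  shows "opbound m n (mcoef f p q) (hnorm_mat a m n f * 2 powr (-(real p * a)))"
  using opnorm_mcoef_le_hnorm_mat[OF assms] opbound_mono[OF opbound_opnorm]
  by (simp add: powr_minus field_simps)

lemma hnorm_mat_nonneg:
  assumes "bdd_above (hset_mat a m n f)"
  shows "0 \<le> hnorm_mat a m n f"
proof -
  have "opnorm m n (mcoef f 0 0) \<le> hnorm_mat a m n f" using opnorm_mcoef_le_hnorm_mat[OF assms, of 0 0] by simp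
  then show ?thesis by (meson opnorm_nonneg order_trans)
qed

lemma vnorm_vcoef_le_hnorm_vec:
  assumes "bdd_above (hset_vec a k f)" "q \<le> 2^p"
  shows "vnorm k (vcoef f p q) \<le> hnorm_vec a k f * 2 powr (-(real p * a))"
proof -
  have "2 powr (real p * a) * vnorm k (vcoef f p q) \<le> hnorm_vec a k f"
    unfolding hnorm_vec_def by (rule cSup_upper) (use assms in \<open>auto simp: hset_vec_def\<close>)
  then show ?thesis by (simp add: powr_minus field_simps)
qed

lemma hnorm_vec_nonneg:
  assumes "bdd_above (hset_vec a k f)"
  shows "0 \<le> hnorm_vec a k f"
proof -
  have "vnorm k (vcoef f 0 0) \<le> hnorm_vec a k f" using vnorm_vcoef_le_hnorm_vec[OF assms, of 0 0] by simp
  then show ?thesis by (meson vnorm_nonneg order_trans)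
qed

lemma hnorm_vec_le:
  assumes "2 powr (-a) * vnorm k (f 0) \<le> K"
    and "\<And>p q. q \<le> 2^p \<Longrightarrow> vnorm k (vcoef f p q) \<le> K * 2 powr (-(real p * a))"
  shows "bdd_above (hset_vec a k f)" "hnorm_vec a k f \<le> K"
proof -
  have le: "x \<le> K" if "x \<in> hset_vec a k f" for x
  proof -
    from that consider "x = 2 powr (-a) * vnorm k (f 0)"
      | p q where "x = 2 powr (real p * a) * vnorm k (vcoef f p q)" "q \<le> 2^p"
      unfolding hset_vec_def by blast
    then show ?thesis
    proof cases
      case (2 p q)
      then have "x \<le> 2 powr (real p * a) * (K * 2 powr (-(real p * a)))"
        using assms(2) by (simp add: mult_left_mono)
      then show ?thesis by (simp add: powr_minus field_simps)
    qed (use assms(1) in simp)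
  qed
  then show "bdd_above (hset_vec a k f)" by (rule bdd_aboveI)
  show "hnorm_vec a k f \<le> K"
    unfolding hnorm_vec_def by (rule cSup_least[OF _ le]) (simp add: hset_vec_def)
qed

theorem mainTheorem10:
  fixes \<alpha> \<beta> :: real
  assumes "0 < \<alpha>" "\<alpha> < 1" "0 < \<beta>" "\<beta> < 1"
  shows "\<exists>C>0. \<forall>(n::nat) (m::nat) (d::nat)
            (u :: real \<Rightarrow> nat \<Rightarrow> nat \<Rightarrow> real)
            (v :: real \<Rightarrow> nat \<Rightarrow> nat \<Rightarrow> real)
            (w :: real \<Rightarrow> nat \<Rightarrow> real).
           cont_mat m n u \<and> Hoelder_mat \<alpha> n d v \<and> Hoelder_vec \<beta> d w \<longrightarrow>
           (let D = (\<lambda>t i. paraprod n u (paraprod d v w) t i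
                           - paraprod d (\<lambda>s. matmul n (u s) (v s)) w t i)
            in bdd_above (hset_vec (\<alpha> + \<beta>) m D) \<and>
               hnorm_vec (\<alpha> + \<beta>) m D
                 \<le> C * supnorm_mat m n u * hnorm_mat \<alpha> n d v * hnorm_vec \<beta> d w)"
proof (intro exI[of _ "commutator_const \<alpha> \<beta>"] conjI allI impI)
  show "0 < commutator_const \<alpha> \<beta>" using assms by (intro commutator_const_pos) auto
  fix n m d :: nat and u v :: "real \<Rightarrow> nat \<Rightarrow> nat \<Rightarrow> real" and w :: "real \<Rightarrow> nat \<Rightarrow> real"
  assume "cont_mat m n u \<and> Hoelder_mat \<alpha> n d v \<and> Hoelder_vec \<beta> d w"
  then have u: "cont_mat m n u" and v: "bdd_above (hset_mat \<alpha> n d v)" and w: "bdd_above (hset_vec \<beta> d w)"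
    by (simp_all add: Hoelder_mat_def Hoelder_vec_def)
  define D where "D = (\<lambda>t i. paraprod n u (paraprod d v w) t i - paraprod d (\<lambda>s. matmul n (u s) (v s)) w t i)"
  define K where "K = commutator_const \<alpha> \<beta> * supnorm_mat m n u * hnorm_mat \<alpha> n d v * hnorm_vec \<beta> d w"
  have D0: "2 powr (-(\<alpha> + \<beta>)) * vnorm m (D 0) \<le> K"
    using commutator_const_pos[of \<alpha> \<beta>] assms supnorm_mat_nonneg[OF u] hnorm_mat_nonneg[OF v] hnorm_vec_nonneg[OF w]
    by (simp add: D_def K_def paraprod_at_0)
  have coef: "vnorm m (vcoef D p q) \<le> K * 2 powr (-(real p * (\<alpha> + \<beta>)))" if "q \<le> 2^p" for p q
    unfolding D_def K_def
    by (rule commutator_vcoef_bound[OF assms supnorm_mat_nonneg[OF u] supnorm_mat_opbound[OF u]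
          hnorm_mat_nonneg[OF v] mcoef_opbound[OF v] hnorm_vec_nonneg[OF w] vnorm_vcoef_le_hnorm_vec[OF w] that])
  have "bdd_above (hset_vec (\<alpha> + \<beta>) m D)" using coef by (rule hnorm_vec_le(1)[where f=D, OF D0])
  moreover have "hnorm_vec (\<alpha> + \<beta>) m D \<le> K" using coef by (rule hnorm_vec_le(2)[where f=D, OF D0])
  ultimately show "let D = (\<lambda>t i. paraprod n u (paraprod d v w) t i - paraprod d (\<lambda>s. matmul n (u s) (v s)) w t i)
        in bdd_above (hset_vec (\<alpha> + \<beta>) m D) \<and>
           hnorm_vec (\<alpha> + \<beta>) m D
             \<le> commutator_const \<alpha> \<beta> * supnorm_mat m n u * hnorm_mat \<alpha> n d v * hnorm_vec \<beta> d w"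
    unfolding Let_def D_def[symmetric] K_def[symmetric] by blast
qed

end
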